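(* Fix $\lambda\in(0,\infty)$ and positive integers $n,m$. Let $\mathfrak{P}\subseteq\{1,\dots,n\}\times\{1,\dots,m\}$ be a pattern, and let $\mathcal{M}_{\mathfrak{P}}$ be the set of non-negative $n\times m$ matrices $M$ with $M_{ij}>0$ if and only if $(i,j)\in\mathfrak{P}$, having no zero row and no zero column (identified with the open set $(0,\infty)^{\mathfrak{P}}$). Let $\mathfrak{D}\subseteq(0,\infty)^n\times(0,\infty)^m$ be the set of pairs $(\mathbf{r},\mathbf{c})$ for which the pattern $\mathfrak{P}$ is exactly $(\mathbf{r},\mathbf{c})$-scalable. Define $\Phi:\mathcal{M}_{\mathfrak{P}}\times\mathfrak{D}\to\mathcal{M}_{\mathfrak{P}}$ by letting $\Phi(M,\mathbf{r},\mathbf{c})$ be the limit of $(\mathbf{r},\mathbf{c})$-Sinkhorn scaling applied to $M^{[\lambda]}$. Then $\Phi$ is smooth.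
   Context: $M^{[\lambda]}$ denotes the matrix with entries $(M_{ij})^{\lambda}$ (zero where $M_{ij}=0$). $(\mathbf{r},\mathbf{c})$-Sinkhorn scaling of a non-negative matrix $A$ is the iterated alternation of rescaling each row $i$ so that its sum equals $r_i$ and rescaling each column $j$ so that its sum equals $c_j$. The pattern $\mathfrak{P}$ is exactly $(\mathbf{r},\mathbf{c})$-scalable if there exists a matrix of pattern $\mathfrak{P}$ (positive exactly on $\mathfrak{P}$) with row sums $\mathbf{r}$ and column sums $\mathbf{c}$; equivalently (Rothblum–Schneider), every $M\in\mathcal{M}_{\mathfrak{P}}$ admits positive diagonal matrices $D_1,D_2$ with $D_1MD_2$ having row sums $\mathbf{r}$ and column sums $\mathbf{c}$; equivalently, $\sum_i r_i=\sum_j c_j$ and for all $I\subseteq\{1,\dots,n\}$, $J\subseteq\{1,\dots,m\}$ with $I^c\times J$ disjoint from $\mathfrak{P}$ one has $\sum_{i\in I}r_i\ge\sum_{j\in J}c_j$, with equality if and only if $I\times J^c$ is disjoint from $\mathfrak{P}$. In this case the Sinkhorn limit is $D_1M^{[\lambda]}D_2$ with these marginals. *)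

theory Defs
  imports "HOL-Analysis.Analysis"
begin

text \<open>C-infinity on an open set U: f lies in a family of functions that are
  continuous and (Frechet) differentiable on U, closed under taking partial
  derivatives in every coordinate direction.\<close>
definition smooth_open :: "'a::euclidean_space set \<Rightarrow> ('a \<Rightarrow> 'b::real_normed_vector) \<Rightarrow> bool" where
  "smooth_open U f \<longleftrightarrow> (\<exists>F. f \<in> F \<and>
     (\<forall>g\<in>F. continuous_on U g \<and> (\<forall>x\<in>U. g differentiable (at x))) \<and>
     (\<forall>g\<in>F. \<forall>v\<in>Basis. \<exists>h\<in>F. \<forall>x\<in>U. frechet_derivative g (at x) v = h x))"

definition smooth_on :: "'a::euclidean_space set \<Rightarrow> ('a \<Rightarrow> 'b::real_normed_vector) \<Rightarrow> bool" where
  "smooth_on S f \<longleftrightarrow> (\<exists>U g. open U \<and> S \<subseteq> U \<and> smooth_open U g \<and> (\<forall>x\<in>S. g x = f x))"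

text \<open>Matrices M :: real^'m^'n, entry M$i$j (row i, column j).\<close>

definition has_pattern :: "('n \<times> 'm) set \<Rightarrow> real^'m^'n \<Rightarrow> bool" where
  "has_pattern P M \<longleftrightarrow> (\<forall>i j. (M$i$j > 0 \<longleftrightarrow> (i,j) \<in> P) \<and> M$i$j \<ge> 0)"

definition pattern_matrices :: "('n::finite \<times> 'm::finite) set \<Rightarrow> (real^'m^'n) set" where
  "pattern_matrices P = {M. has_pattern P M \<and> (\<forall>i. \<exists>j. M$i$j \<noteq> 0) \<and> (\<forall>j. \<exists>i. M$i$j \<noteq> 0)}"

definition row_sums :: "real^'m::finite^'n \<Rightarrow> real^'n" where
  "row_sums M = (\<chi> i. \<Sum>j\<in>UNIV. M$i$j)"

definition col_sums :: "real^'m^'n::finite \<Rightarrow> real^'m" where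
  "col_sums M = (\<chi> j. \<Sum>i\<in>UNIV. M$i$j)"

definition exactly_scalable :: "('n::finite \<times> 'm::finite) set \<Rightarrow> real^'n \<Rightarrow> real^'m \<Rightarrow> bool" where
  "exactly_scalable P r c \<longleftrightarrow> (\<exists>X. has_pattern P X \<and> row_sums X = r \<and> col_sums X = c)"

definition scalable_marginals :: "('n::finite \<times> 'm::finite) set \<Rightarrow> ((real^'n) \<times> (real^'m)) set" where
  "scalable_marginals P = {(r,c). (\<forall>i. r$i > 0) \<and> (\<forall>j. c$j > 0) \<and> exactly_scalable P r c}"

definition entry_power :: "real \<Rightarrow> real^'m^'n \<Rightarrow> real^'m^'n" where
  "entry_power lam M = (\<chi> i j. if M$i$j = 0 then 0 else (M$i$j) powr lam)"

definition row_scale :: "real^'n \<Rightarrow> real^'m::finite^'n \<Rightarrow> real^'m^'n" where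
  "row_scale r A = (\<chi> i j. r$i * A$i$j / (\<Sum>k\<in>UNIV. A$i$k))"

definition col_scale :: "real^'m \<Rightarrow> real^'m^'n::finite \<Rightarrow> real^'m^'n" where
  "col_scale c A = (\<chi> i j. c$j * A$i$j / (\<Sum>k\<in>UNIV. A$k$j))"

definition sinkhorn_iter :: "real^'n::finite \<Rightarrow> real^'m::finite \<Rightarrow> nat \<Rightarrow> real^'m^'n \<Rightarrow> real^'m^'n" where
  "sinkhorn_iter r c k = (col_scale c \<circ> row_scale r) ^^ k"

definition sinkhorn_limit :: "real^'n::finite \<Rightarrow> real^'m::finite \<Rightarrow> real^'m^'n \<Rightarrow> real^'m^'n" where
  "sinkhorn_limit r c A = lim (\<lambda>k. sinkhorn_iter r c k A)"

definition Phi :: "real \<Rightarrow> (real^'m::finite^'n::finite) \<times> (real^'n) \<times> (real^'m) \<Rightarrow> real^'m^'n" where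
  "Phi lam = (\<lambda>(M, r, c). sinkhorn_limit r c (entry_power lam M))"

end

theory Submission
  imports Defs
begin

(*
  The Sinkhorn limit B of A = M^[lam] is the unique matrix with pattern P, row sums r, column
  sums c, and log B - log A in the space L of "outer sums" (u_i + v_j on P).  Flattening
  matrices to vectors, these conditions say G(B) = T(r, c) + Pi(log A) for the chart
    G(B) = (entries of B off P) + T(row sums of B, column sums of B) + Pi(log B),
  where T(u, v) is the outer sum and Pi the orthogonal projection onto the complement of L.
  Since Pi(log A) = lam Pi(log M), the limit is G^-1(T(r, c) + lam Pi(log M)), a smooth function
  of (M, r, c) as soon as G^-1 is smooth.  G is injective with injective derivative on matrices
  that are positive on P, by the monotonicity (x - y)(log x - log y) >= 0; invariance of domain
  and the inverse function theorem, with Cramer's rule for the smoothness of the inverse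
  derivative, make G^-1 smooth on an open set.  That Sinkhorn scaling converges to a matrix with
  the three properties follows from the potential sum (B - X log B), which every half-step
  decreases by a Kullback-Leibler divergence of marginals; here X is any exact scaling with the
  given marginals.
*)

section \<open>Functions of class \<open>C\<^sup>k\<close>\<close>

fun Ck_on :: "nat \<Rightarrow> 'a::euclidean_space set \<Rightarrow> ('a \<Rightarrow> 'b::real_normed_vector) \<Rightarrow> bool"
  where
  "Ck_on 0 U f \<longleftrightarrow> continuous_on U f"
| "Ck_on (Suc k) U f \<longleftrightarrow> continuous_on U f \<and> (\<forall>x\<in>U. f differentiable (at x)) \<and>
      (\<forall>v\<in>Basis. Ck_on k U (\<lambda>x. frechet_derivative f (at x) v))"

lemma Ck_on_imp_continuous_on: "Ck_on k U f \<Longrightarrow> continuous_on U f"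
  by (cases k) auto

lemma Ck_on_Suc_imp_Ck_on: "Ck_on (Suc k) U f \<Longrightarrow> Ck_on k U f"
proof (induction k arbitrary: f)
  case (Suc k)
  then show ?case by (metis Ck_on.simps(2))
qed simp

lemma Ck_on_Suc_imp_has_derivative:
  "Ck_on (Suc k) U f \<Longrightarrow> x \<in> U \<Longrightarrow> (f has_derivative frechet_derivative f (at x)) (at x)"
  by (simp add: frechet_derivative_works)

lemma Ck_on_cong:
  assumes "open U" and "\<And>x. x \<in> U \<Longrightarrow> f x = g x" and "Ck_on k U f"
  shows "Ck_on k U g"
  using assms(2,3)
proof (induction k arbitrary: f g)
  case 0
  then show ?case
    using continuous_on_cong[of U U f g] by simp
next
  case (Suc k)
  have dg: "(g has_derivative frechet_derivative f (at x)) (at x)" if "x \<in> U" for x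
    using Ck_on_Suc_imp_has_derivative[OF Suc.prems(2) that]
    by (rule has_derivative_transform_within_open[OF _ \<open>open U\<close> that]) (use Suc.prems in auto)
  have "Ck_on k U (\<lambda>x. frechet_derivative g (at x) v)" if "v \<in> Basis" for v
  proof (rule Suc.IH)
    show "Ck_on k U (\<lambda>x. frechet_derivative f (at x) v)"
      using Suc.prems(2) that by simp
    show "frechet_derivative f (at x) v = frechet_derivative g (at x) v" if "x \<in> U" for x
      using frechet_derivative_at[OF dg[OF that]] by simp
  qed
  moreover have "continuous_on U g"
    using Suc.prems continuous_on_cong[of U U f g] Ck_on_imp_continuous_on by blast
  ultimately show ?case
    using dg by (auto simp: differentiable_def)
qed

lemma Ck_on_SucI:
  assumes "open U" and "\<And>x. x \<in> U \<Longrightarrow> (f has_derivative f' x) (at x)" and "continuous_on U f"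
    and "\<And>v. v \<in> Basis \<Longrightarrow> Ck_on k U (\<lambda>x. f' x v)"
  shows "Ck_on (Suc k) U f"
proof -
  have "f' x = frechet_derivative f (at x)" if "x \<in> U" for x
    using assms(2)[OF that] frechet_derivative_at by metis
  then have "Ck_on k U (\<lambda>x. frechet_derivative f (at x) v)" if "v \<in> Basis" for v
    by (intro Ck_on_cong[OF assms(1) _ assms(4)[OF that]]) simp
  with assms(2,3) show ?thesis
    by (auto simp: differentiable_def)
qed

lemma Ck_on_subset:
  assumes "Ck_on k U f" and "V \<subseteq> U"
  shows "Ck_on k V f"
  using assms(1)
proof (induction k arbitrary: f)
  case 0
  then show ?case using continuous_on_subset[OF _ assms(2)] by simp
next
  case (Suc k)
  then show ?case using continuous_on_subset[OF _ assms(2)] assms(2) by auto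
qed

lemma Ck_on_const: "open U \<Longrightarrow> Ck_on k U (\<lambda>x. c)"
proof (induction k arbitrary: c)
  case (Suc k)
  then show ?case by (intro Ck_on_SucI[where f'="\<lambda>x h. 0"]) simp_all
qed simp

lemma Ck_on_ident: "open U \<Longrightarrow> Ck_on k U (\<lambda>x. x)"
proof (induction k)
  case (Suc k)
  then show ?case by (intro Ck_on_SucI[where f'="\<lambda>x h. h"]) (simp_all add: Ck_on_const)
qed simp

lemma Ck_on_add:
  assumes "open U" and "Ck_on k U f" and "Ck_on k U g"
  shows "Ck_on k U (\<lambda>x. f x + g x)"
  using assms(2,3)
proof (induction k arbitrary: f g)
  case (Suc k)
  let ?f' = "\<lambda>x. frechet_derivative f (at x)" and ?g' = "\<lambda>x. frechet_derivative g (at x)"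
  show ?case
  proof (rule Ck_on_SucI[OF \<open>open U\<close>, where f'="\<lambda>x h. ?f' x h + ?g' x h"])
    show "((\<lambda>x. f x + g x) has_derivative (\<lambda>h. ?f' x h + ?g' x h)) (at x)" if "x \<in> U" for x
      using Suc.prems that by (intro has_derivative_add Ck_on_Suc_imp_has_derivative)
    show "continuous_on U (\<lambda>x. f x + g x)"
      using Suc.prems by (intro continuous_on_add Ck_on_imp_continuous_on)
    show "Ck_on k U (\<lambda>x. ?f' x v + ?g' x v)" if "v \<in> Basis" for v
      using Suc.prems that by (intro Suc.IH) simp_all
  qed
qed (simp add: continuous_on_add)

lemma Ck_on_scaleR:
  fixes a :: "'a::euclidean_space \<Rightarrow> real"
  assumes "open U" and "Ck_on k U a" and "Ck_on k U f"
  shows "Ck_on k U (\<lambda>x. a x *\<^sub>R f x)"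
  using assms(2,3)
proof (induction k arbitrary: a f)
  case (Suc k)
  let ?a' = "\<lambda>x. frechet_derivative a (at x)" and ?f' = "\<lambda>x. frechet_derivative f (at x)"
  show ?case
  proof (rule Ck_on_SucI[OF \<open>open U\<close>, where f'="\<lambda>x h. a x *\<^sub>R ?f' x h + ?a' x h *\<^sub>R f x"])
    show "((\<lambda>x. a x *\<^sub>R f x) has_derivative (\<lambda>h. a x *\<^sub>R ?f' x h + ?a' x h *\<^sub>R f x)) (at x)"
      if "x \<in> U" for x
      using Suc.prems that by (intro has_derivative_scaleR Ck_on_Suc_imp_has_derivative)
    show "Ck_on k U (\<lambda>x. a x *\<^sub>R ?f' x v + ?a' x v *\<^sub>R f x)" if "v \<in> Basis" for v
      using Suc.prems that Ck_on_Suc_imp_Ck_on[OF Suc.prems(1)] Ck_on_Suc_imp_Ck_on[OF Suc.prems(2)]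
      by (intro Ck_on_add[OF \<open>open U\<close>] Suc.IH) simp_all
    show "continuous_on U (\<lambda>x. a x *\<^sub>R f x)"
      using Suc.prems by (intro continuous_on_scaleR Ck_on_imp_continuous_on)
  qed
qed (simp add: continuous_on_scaleR)

lemma Ck_on_mult:
  fixes a b :: "'a::euclidean_space \<Rightarrow> real"
  assumes "open U" and "Ck_on k U a" and "Ck_on k U b"
  shows "Ck_on k U (\<lambda>x. a x * b x)"
  using Ck_on_scaleR[OF assms] by simp

lemma Ck_on_sum:
  assumes "open U" and "\<And>i. i \<in> S \<Longrightarrow> Ck_on k U (f i)"
  shows "Ck_on k U (\<lambda>x. \<Sum>i\<in>S. f i x)"
  using assms(2)
proof (induction S rule: infinite_finite_induct)
  case (insert i S)
  then show ?case by (simp add: Ck_on_add[OF assms(1)])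
qed (simp_all add: Ck_on_const[OF assms(1)])

lemma Ck_on_prod:
  fixes f :: "'i \<Rightarrow> 'a::euclidean_space \<Rightarrow> real"
  assumes "open U" and "\<And>i. i \<in> S \<Longrightarrow> Ck_on k U (f i)"
  shows "Ck_on k U (\<lambda>x. \<Prod>i\<in>S. f i x)"
  using assms(2)
proof (induction S rule: infinite_finite_induct)
  case (insert i S)
  then show ?case by (simp add: Ck_on_mult[OF assms(1)])
qed (simp_all add: Ck_on_const[OF assms(1)])

lemma Ck_on_linear_compose:
  assumes "open U" and "bounded_linear L" and "Ck_on k U f"
  shows "Ck_on k U (\<lambda>x. L (f x))"
  using assms(3)
proof (induction k arbitrary: f)
  case 0
  then show ?case
    by (auto intro: continuous_on_compose2[OF linear_continuous_on[OF assms(2)]])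
next
  case (Suc k)
  show ?case
  proof (rule Ck_on_SucI[OF \<open>open U\<close>, where f'="\<lambda>x h. L (frechet_derivative f (at x) h)"])
    show "((\<lambda>x. L (f x)) has_derivative (\<lambda>h. L (frechet_derivative f (at x) h))) (at x)"
      if "x \<in> U" for x
      by (rule bounded_linear.has_derivative[OF assms(2) Ck_on_Suc_imp_has_derivative[OF Suc.prems that]])
    show "continuous_on U (\<lambda>x. L (f x))"
      using Ck_on_imp_continuous_on[OF Suc.prems]
      by (intro continuous_on_compose2[OF linear_continuous_on[OF assms(2)]]) auto
    show "Ck_on k U (\<lambda>x. L (frechet_derivative f (at x) v))" if "v \<in> Basis" for v
      using Suc.prems that by (intro Suc.IH) simp
  qed
qed

lemma Ck_on_linear: "open U \<Longrightarrow> bounded_linear L \<Longrightarrow> Ck_on k U L"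
  using Ck_on_linear_compose[OF _ _ Ck_on_ident] by blast

lemma Ck_on_vec_nth: "open U \<Longrightarrow> Ck_on k U f \<Longrightarrow> Ck_on k U (\<lambda>x. f x $ i)"
  by (rule Ck_on_linear_compose[OF _ bounded_linear_vec_nth])

lemma Ck_on_vec_lambda:
  fixes f :: "'i::finite \<Rightarrow> 'a::euclidean_space \<Rightarrow> real"
  assumes "open U" and "\<And>i. Ck_on k U (f i)"
  shows "Ck_on k U (\<lambda>x. \<chi> i. f i x)"
proof -
  have "Ck_on k U (\<lambda>x. f i x *\<^sub>R axis i (1::real))" for i
    by (rule Ck_on_scaleR[OF assms(1,2) Ck_on_const[OF assms(1)]])
  then have "Ck_on k U (\<lambda>x. \<Sum>i\<in>UNIV. f i x *\<^sub>R axis i (1::real))"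
    by (rule Ck_on_sum[OF assms(1)])
  moreover have "(\<lambda>x. \<Sum>i\<in>UNIV. f i x *\<^sub>R axis i (1::real)) = (\<lambda>x. \<chi> i. f i x)"
    by (simp add: fun_eq_iff vec_eq_iff axis_def if_distrib cong: if_cong)
  ultimately show ?thesis by (simp only:)
qed

lemma has_derivative_vec_lambda:
  fixes f :: "'i::finite \<Rightarrow> 'a::real_normed_vector \<Rightarrow> real"
  assumes "\<And>i. (f i has_derivative f' i) F"
  shows "((\<lambda>x. \<chi> i. f i x) has_derivative (\<lambda>h. \<chi> i. f' i h)) F"
proof -
  have vec_eq: "(\<chi> i. g i) = (\<Sum>i\<in>UNIV. g i *\<^sub>R axis i (1::real))" for g :: "'i \<Rightarrow> real"
    by (simp add: vec_eq_iff axis_def if_distrib cong: if_cong)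
  have "((\<lambda>x. \<Sum>i\<in>UNIV. f i x *\<^sub>R axis i (1::real)) has_derivative
      (\<lambda>h. \<Sum>i\<in>UNIV. f' i h *\<^sub>R axis i (1::real))) F"
    by (intro has_derivative_sum has_derivative_scaleR_left assms)
  then show ?thesis
    by (simp only: vec_eq)
qed


lemma Ck_on_compose:
  fixes f :: "'a::euclidean_space \<Rightarrow> 'c::euclidean_space"
  assumes "open U" and "open W" and "f ` U \<subseteq> W" and "Ck_on k W g" and "Ck_on k U f"
  shows "Ck_on k U (\<lambda>x. g (f x))"
  using assms(4,5)
proof (induction k arbitrary: g)
  case 0
  then show ?case by (auto intro: continuous_on_compose2[OF _ _ assms(3)])
next
  case (Suc k)
  let ?f' = "\<lambda>x. frechet_derivative f (at x)" and ?g' = "\<lambda>y. frechet_derivative g (at y)"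
  \<comment> \<open>chain rule, with the inner derivative expanded in the basis of the middle space\<close>
  let ?D = "\<lambda>x v. \<Sum>b\<in>Basis. (?f' x v \<bullet> b) *\<^sub>R ?g' (f x) b"
  show ?case
  proof (rule Ck_on_SucI[OF \<open>open U\<close>, where f'="?D"])
    show "((\<lambda>x. g (f x)) has_derivative ?D x) (at x)" if "x \<in> U" for x
    proof -
      have dg: "(g has_derivative ?g' (f x)) (at (f x))"
        using Suc.prems(1) assms(3) that by (intro Ck_on_Suc_imp_has_derivative) auto
      have lin: "linear (?g' (f x))"
        by (rule has_derivative_linear[OF dg])
      have "?g' (f x) (?f' x v) = ?D x v" for v
      proof -
        have "?g' (f x) (?f' x v) = ?g' (f x) (\<Sum>b\<in>Basis. (?f' x v \<bullet> b) *\<^sub>R b)"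
          by (simp add: euclidean_representation)
        also have "\<dots> = ?D x v"
          by (simp add: linear_sum[OF lin] linear_scale[OF lin])
        finally show ?thesis .
      qed
      then show ?thesis
        using has_derivative_compose[OF Ck_on_Suc_imp_has_derivative[OF Suc.prems(2) that] dg]
        by simp
    qed
    show "continuous_on U (\<lambda>x. g (f x))"
      using Suc.prems assms(3) Ck_on_imp_continuous_on
      by (intro continuous_on_compose2[of W g U f]) auto
    show "Ck_on k U (\<lambda>x. ?D x v)" if "v \<in> Basis" for v
      using Suc.prems that Ck_on_Suc_imp_Ck_on[OF Suc.prems(2)]
      by (intro Ck_on_sum[OF \<open>open U\<close>] Ck_on_scaleR[OF \<open>open U\<close>] Suc.IH
          Ck_on_linear_compose[OF \<open>open U\<close> bounded_linear_inner_left]) auto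
  qed
qed

lemma Ck_on_inverse_real: "Ck_on k {x::real. x \<noteq> 0} inverse"
proof (induction k)
  case 0
  show ?case by (simp add: continuous_on_inverse continuous_on_id)
next
  case (Suc k)
  have op: "open {x::real. x \<noteq> 0}"
    by (simp add: open_Collect_neq continuous_on_id continuous_on_const)
  show ?case
  proof (rule Ck_on_SucI[OF op, where f'="\<lambda>x h. - (inverse x * h * inverse x)"])
    show "Ck_on k {x::real. x \<noteq> 0} (\<lambda>x. - (inverse x * v * inverse x))" for v
      using Ck_on_linear_compose[OF op bounded_linear_mult_right[of "- v"] Ck_on_mult[OF op Suc Suc]]
      by (simp add: mult.commute mult.left_commute)
  qed (auto intro: has_derivative_inverse' simp: continuous_on_inverse continuous_on_id)
qed

lemma Ck_on_ln: "Ck_on k {x::real. 0 < x} ln"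
proof (cases k)
  case 0
  then show ?thesis by (simp add: continuous_on_ln continuous_on_id)
next
  case (Suc l)
  have op: "open {x::real. 0 < x}"
    by (simp add: open_Collect_less continuous_on_id continuous_on_const)
  show ?thesis
    unfolding Suc
  proof (rule Ck_on_SucI[OF op, where f'="\<lambda>x h. inverse x * h"])
    show "(ln has_derivative (\<lambda>h. inverse x * h)) (at x)" if "x \<in> {x::real. 0 < x}" for x
      using that DERIV_ln[of x] by (simp add: has_field_derivative_def)
    show "Ck_on l {x::real. 0 < x} (\<lambda>x. inverse x * v)" for v
      by (intro Ck_on_mult[OF op Ck_on_subset[OF Ck_on_inverse_real] Ck_on_const[OF op]]) auto
  qed (simp add: continuous_on_ln continuous_on_id)
qed

lemma Ck_on_inverse:
  fixes g :: "'a::euclidean_space \<Rightarrow> real"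
  assumes "open U" and "Ck_on k U g" and "\<And>x. x \<in> U \<Longrightarrow> g x \<noteq> 0"
  shows "Ck_on k U (\<lambda>x. inverse (g x))"
  using assms
  by (intro Ck_on_compose[OF _ _ _ Ck_on_inverse_real])
     (auto simp: open_Collect_neq continuous_on_id continuous_on_const)

lemma Ck_on_ln_compose:
  fixes g :: "'a::euclidean_space \<Rightarrow> real"
  assumes "open U" and "Ck_on k U g" and "\<And>x. x \<in> U \<Longrightarrow> 0 < g x"
  shows "Ck_on k U (\<lambda>x. ln (g x))"
  using assms
  by (intro Ck_on_compose[OF _ _ _ Ck_on_ln])
     (auto simp: open_Collect_less continuous_on_id continuous_on_const)

lemma smooth_open_if_Ck_on:
  assumes "\<And>k. Ck_on k U f"
  shows "smooth_open U f"
proof -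
  let ?F = "{g. \<forall>k. Ck_on k U g}"
  have "continuous_on U g \<and> (\<forall>x\<in>U. g differentiable at x)" if "g \<in> ?F" for g
    using that Ck_on.simps(2)[of 0 U g] by simp
  moreover have "\<exists>h\<in>?F. \<forall>x\<in>U. frechet_derivative g (at x) v = h x"
    if "g \<in> ?F" and "v \<in> Basis" for g v
  proof
    have "Ck_on (Suc k) U g" for k
      using that(1) by simp
    with that(2) show "(\<lambda>x. frechet_derivative g (at x) v) \<in> ?F"
      by simp
  qed simp
  moreover have "f \<in> ?F"
    using assms by simp
  ultimately show ?thesis
    unfolding smooth_open_def by (intro exI[of _ ?F]) blast
qed


section \<open>A global smooth inverse function theorem\<close>

lemma Ck_on_det:
  fixes M :: "'a::euclidean_space \<Rightarrow> real^'k::finite^'k"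
  assumes "open U" and "\<And>i j. Ck_on k U (\<lambda>x. M x $ i $ j)"
  shows "Ck_on k U (\<lambda>x. det (M x))"
  unfolding det_def
  by (intro Ck_on_sum Ck_on_mult Ck_on_const Ck_on_prod assms)

lemma Ck_on_inv_apply:
  fixes A :: "'a::euclidean_space \<Rightarrow> real^'k::finite \<Rightarrow> real^'k"
  assumes U: "open U" and lin: "\<And>x. x \<in> U \<Longrightarrow> linear (A x)"
    and inj: "\<And>x. x \<in> U \<Longrightarrow> inj (A x)"
    and Ck: "\<And>j. Ck_on k U (\<lambda>x. A x (axis j 1))"
  shows "Ck_on k U (\<lambda>x. inv (A x) v)"
proof -
  let ?M = "\<lambda>x. matrix (A x)"
  let ?cramer = "\<lambda>x. \<chi> l. det (\<chi> i j. if j = l then v$i else ?M x $ i $ j) * inverse (det (?M x))"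
  have entries: "Ck_on k U (\<lambda>x. ?M x $ i $ j)" for i j
    unfolding matrix_def using Ck_on_vec_nth[OF U Ck[of j], of i] by simp
  have det_nz: "det (?M x) \<noteq> 0" if "x \<in> U" for x
    using det_nz_iff_inj[OF lin[OF that]] inj[OF that] by simp
  have Ck_cramer: "Ck_on k U ?cramer"
  proof (intro Ck_on_vec_lambda Ck_on_mult Ck_on_inverse Ck_on_det U det_nz)
    show "Ck_on k U (\<lambda>x. (\<chi> i j. if j = l then v$i else ?M x $ i $ j) $ i $ j)" for l i j
      by (cases "j = l") (simp_all add: Ck_on_const[OF U] entries)
  qed (simp_all add: entries)
  have "?cramer x = inv (A x) v" if "x \<in> U" for x
  proof -
    have "A x (inv (A x) v) = v"
      using linear_inj_imp_surj[OF lin[OF that] inj[OF that]] by (simp add: surj_f_inv_f)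
    then have "?M x *v inv (A x) v = v"
      using lin[OF that] by simp
    then show ?thesis
      using cramer[OF det_nz[OF that]] by (simp add: divide_inverse)
  qed
  then show ?thesis
    by (rule Ck_on_cong[OF U _ Ck_cramer])
qed

lemma has_derivative_inv_into:
  fixes f :: "'a::euclidean_space \<Rightarrow> 'a"
  assumes S: "open S" and inj: "inj_on f S" and cont: "continuous_on S f"
    and deriv: "(f has_derivative f') (at (inv_into S f y))" and deriv_inj: "inj f'"
    and y: "y \<in> f ` S"
  shows "(inv_into S f has_derivative inv f') (at y)"
proof -
  have "f' \<circ> inv f' = id"
    using linear_inj_imp_surj[OF has_derivative_linear[OF deriv] deriv_inj] by (simp add: surj_iff)
  then have "(inv_into S f has_derivative inv f') (at (f (inv_into S f y)))"
    using inv_into_f_f[OF inj]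
    by (intro has_derivative_inverse_strong[OF S inv_into_into[OF y] cont _ deriv]) auto
  then show ?thesis
    using f_inv_into_f[OF y] by simp
qed

text \<open>Cramer's rule (\<open>Ck_on_inv_apply\<close>) makes the inverse of the derivative as smooth as the
  derivative itself, which drives the induction on \<open>k\<close>.\<close>

theorem
  fixes f :: "real^'k::finite \<Rightarrow> real^'k"
  assumes S: "open S" and inj: "inj_on f S" and Ck: "\<And>k. Ck_on k S f"
    and deriv: "\<And>x. x \<in> S \<Longrightarrow> (f has_derivative f' x) (at x)"
    and deriv_inj: "\<And>x. x \<in> S \<Longrightarrow> inj (f' x)"
  shows open_image_if_Ck_on: "open (f ` S)"
    and Ck_on_inv_into: "Ck_on k (f ` S) (inv_into S f)"
proof -
  have cont: "continuous_on S f"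
    using Ck_on_imp_continuous_on[OF Ck] .
  show op: "open (f ` S)"
    by (rule invariance_of_domain[OF cont S inj])
  let ?g = "inv_into S f"
  have g_in: "?g y \<in> S" if "y \<in> f ` S" for y
    using that by (rule inv_into_into)
  have lin: "linear (f' x)" if "x \<in> S" for x
    using deriv[OF that] by (rule has_derivative_linear)
  have g_deriv: "(?g has_derivative inv (f' (?g y))) (at y)" if "y \<in> f ` S" for y
    using deriv[OF g_in[OF that]] deriv_inj[OF g_in[OF that]] that
    by (rule has_derivative_inv_into[OF S inj cont])
  have g_cont: "continuous_on (f ` S) ?g"
    using g_deriv by (intro continuous_at_imp_continuous_on) (blast intro: has_derivative_continuous)
  have Ck_deriv: "Ck_on k S (\<lambda>x. f' x (axis j 1))" for k j
  proof (rule Ck_on_cong[OF S])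
    show "Ck_on k S (\<lambda>x. frechet_derivative f (at x) (axis j 1))"
      using Ck[of "Suc k"] by simp
    show "frechet_derivative f (at x) (axis j 1) = f' x (axis j 1)" if "x \<in> S" for x
      using frechet_derivative_at[OF deriv[OF that]] by simp
  qed
  show "Ck_on k (f ` S) ?g"
  proof (induction k)
    case 0
    then show ?case using g_cont by simp
  next
    case (Suc k)
    show ?case
    proof (rule Ck_on_SucI[OF op g_deriv g_cont])
      fix v :: "real^'k"
      have "Ck_on k S (\<lambda>x. inv (f' x) v)"
        using lin deriv_inj Ck_deriv by (rule Ck_on_inv_apply[OF S])
      then show "Ck_on k (f ` S) (\<lambda>y. inv (f' (?g y)) v)"
        using g_in by (intro Ck_on_compose[OF op S _ _ Suc.IH]) auto
    qed
  qed
qed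


text \<open>\<open>perp_proj T\<close> projects onto the orthogonal complement of \<open>T\<close>; it is only meaningful
  when \<open>T\<close> is a subspace.\<close>

definition perp_proj :: "'a::euclidean_space set \<Rightarrow> 'a \<Rightarrow> 'a" where
  "perp_proj T =
    (SOME q. linear q \<and> (\<forall>x. x - q x \<in> T) \<and> (\<forall>x y. y \<in> T \<longrightarrow> q x \<bullet> y = 0))"

lemma perp_proj_exists:
  fixes T :: "'a::euclidean_space set"
  assumes T: "subspace T"
  shows "\<exists>q. linear q \<and> (\<forall>x. x - q x \<in> T) \<and>
    (\<forall>x y. y \<in> T \<longrightarrow> q x \<bullet> y = 0)"
proof -
  have span_T: "span T = T"
    using T by (simp add: span_eq_iff)
  have "\<exists>y. y \<in> T \<and> (\<forall>w\<in>T. (x - y) \<bullet> w = 0)" for x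
  proof -
    obtain y z where "y \<in> span T" and "\<And>w. w \<in> span T \<Longrightarrow> orthogonal z w" and "x = y + z"
      using orthogonal_subspace_decomp_exists[of T x] by blast
    then show ?thesis
      unfolding span_T orthogonal_def by (intro exI[of _ y]) simp
  qed
  then obtain p where p: "\<And>x. p x \<in> T" and orth: "\<And>x w. w \<in> T \<Longrightarrow> (x - p x) \<bullet> w = 0"
    by metis
  have p_unique: "p (a + b) = a" if a: "a \<in> T" and b: "\<And>w. w \<in> T \<Longrightarrow> b \<bullet> w = 0" for a b
  proof -
    let ?d = "p (a + b) - a"
    have d: "?d \<in> T"
      using T a p by (simp add: subspace_diff)
    have "?d \<bullet> ?d = (b - (a + b - p (a + b))) \<bullet> ?d"
      by simp
    also have "\<dots> = 0"
      using b[OF d] orth[OF d] by (simp only: inner_diff_left)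
    finally show ?thesis by simp
  qed
  have "linear p"
  proof (rule linearI)
    fix x y
    have "p ((p x + p y) + ((x - p x) + (y - p y))) = p x + p y"
      using T p orth by (intro p_unique) (auto simp: subspace_add inner_add_left)
    then show "p (x + y) = p x + p y"
      by simp
  next
    fix c :: real and x
    have "p (c *\<^sub>R p x + c *\<^sub>R (x - p x)) = c *\<^sub>R p x"
      using T p orth by (intro p_unique) (auto simp: subspace_scale)
    then show "p (c *\<^sub>R x) = c *\<^sub>R p x"
      by (simp add: algebra_simps)
  qed
  then have "linear (\<lambda>x. x - p x)"
    by (intro linear_compose_sub linear_id[unfolded id_def])
  moreover have "x - (x - p x) \<in> T" for x
    using p by simp
  ultimately show ?thesis
    using orth by blast
qed

context
  fixes T :: "'a::euclidean_space set"
  assumes T: "subspace T"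
begin

lemma
  shows linear_perp_proj: "linear (perp_proj T)"
    and perp_proj_diff_in: "x - perp_proj T x \<in> T"
    and perp_proj_orthogonal: "y \<in> T \<Longrightarrow> perp_proj T x \<bullet> y = 0"
  using someI_ex[OF perp_proj_exists[OF T]] unfolding perp_proj_def by blast+

lemma perp_proj_eq_0_iff: "perp_proj T x = 0 \<longleftrightarrow> x \<in> T"
proof
  assume "x \<in> T"
  then have "x - (x - perp_proj T x) \<in> T"
    by (rule subspace_diff[OF T _ perp_proj_diff_in])
  then have "perp_proj T x \<bullet> perp_proj T x = 0"
    by (intro perp_proj_orthogonal) simp
  then show "perp_proj T x = 0"
    by simp
qed (use perp_proj_diff_in[of x] in simp)

lemma perp_proj_add_in: "y \<in> T \<Longrightarrow> perp_proj T (x + y) = perp_proj T x"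
  using linear_add[OF linear_perp_proj] perp_proj_eq_0_iff by simp

end

section \<open>The log-linear chart of a pattern\<close>

text \<open>Matrices are flattened to vectors indexed by \<open>'n \<times> 'm\<close>, so that Cramer's rule applies
  to the chart; the entries off the pattern \<open>P\<close> are carried along unchanged.\<close>

context
  fixes P :: "('n::finite \<times> 'm::finite) set"
begin

definition outer_sum :: "real^'n \<Rightarrow> real^'m \<Rightarrow> real^('n \<times> 'm)" where
  "outer_sum u v = (\<chi> k. if k \<in> P then u $ fst k + v $ snd k else 0)"

definition outer_sums :: "(real^('n \<times> 'm)) set" where
  "outer_sums = {outer_sum u v | u v. True}"

definition row_sums_on :: "real^('n \<times> 'm) \<Rightarrow> real^'n" where
  "row_sums_on x = (\<chi> i. \<Sum>j\<in>UNIV. if (i, j) \<in> P then x $ (i, j) else 0)"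

definition col_sums_on :: "real^('n \<times> 'm) \<Rightarrow> real^'m" where
  "col_sums_on x = (\<chi> j. \<Sum>i\<in>UNIV. if (i, j) \<in> P then x $ (i, j) else 0)"

definition off_pattern :: "real^('n \<times> 'm) \<Rightarrow> real^('n \<times> 'm)" where
  "off_pattern x = (\<chi> k. if k \<in> P then 0 else x $ k)"

definition log_on :: "real^('n \<times> 'm) \<Rightarrow> real^('n \<times> 'm)" where
  "log_on x = (\<chi> k. if k \<in> P then ln (x $ k) else 0)"

definition pos_on :: "(real^('n \<times> 'm)) set" where
  "pos_on = {x. \<forall>k\<in>P. 0 < x $ k}"

definition marginal_part :: "real^('n \<times> 'm) \<Rightarrow> real^('n \<times> 'm)" where
  "marginal_part x = off_pattern x + outer_sum (row_sums_on x) (col_sums_on x)"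

definition sinkhorn_chart :: "real^('n \<times> 'm) \<Rightarrow> real^('n \<times> 'm)" where
  "sinkhorn_chart x = marginal_part x + perp_proj outer_sums (log_on x)"

definition sinkhorn_chart_deriv :: "real^('n \<times> 'm) \<Rightarrow> real^('n \<times> 'm) \<Rightarrow> real^('n \<times> 'm)" where
  "sinkhorn_chart_deriv x h =
     marginal_part h + perp_proj outer_sums (\<chi> k. if k \<in> P then h $ k / x $ k else 0)"

lemma outer_sum_inner: "outer_sum u v \<bullet> x = u \<bullet> row_sums_on x + v \<bullet> col_sums_on x"
proof -
  have "outer_sum u v \<bullet> x
      = (\<Sum>i\<in>UNIV. \<Sum>j\<in>UNIV. (if (i, j) \<in> P then u $ i + v $ j else 0) * x $ (i, j))"
    by (simp add: inner_vec_def outer_sum_def UNIV_Times_UNIV[symmetric] sum.cartesian_product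
        case_prod_unfold del: UNIV_Times_UNIV)
  also have "\<dots> = (\<Sum>i\<in>UNIV. \<Sum>j\<in>UNIV. u $ i * (if (i, j) \<in> P then x $ (i, j) else 0))
      + (\<Sum>i\<in>UNIV. \<Sum>j\<in>UNIV. v $ j * (if (i, j) \<in> P then x $ (i, j) else 0))"
    by (simp add: sum.distrib[symmetric]) (intro sum.cong refl, simp add: algebra_simps)
  also have "(\<Sum>i\<in>UNIV. \<Sum>j\<in>UNIV. v $ j * (if (i, j) \<in> P then x $ (i, j) else 0))
      = (\<Sum>j\<in>UNIV. \<Sum>i\<in>UNIV. v $ j * (if (i, j) \<in> P then x $ (i, j) else 0))"
    by (rule sum.swap)
  also have "(\<Sum>i\<in>UNIV. \<Sum>j\<in>UNIV. u $ i * (if (i, j) \<in> P then x $ (i, j) else 0)) + \<dots>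
      = u \<bullet> row_sums_on x + v \<bullet> col_sums_on x"
    by (simp add: inner_vec_def row_sums_on_def col_sums_on_def sum_distrib_left)
  finally show ?thesis .
qed

lemma outer_sum_add: "outer_sum (u + u') (v + v') = outer_sum u v + outer_sum u' v'"
  by (simp add: outer_sum_def vec_eq_iff)

lemma outer_sum_scaleR: "outer_sum (c *\<^sub>R u) (c *\<^sub>R v) = c *\<^sub>R outer_sum u v"
  by (simp add: outer_sum_def vec_eq_iff algebra_simps)

lemma tendsto_outer_sum:
  assumes "(f \<longlongrightarrow> u) F" and "(g \<longlongrightarrow> v) F"
  shows "((\<lambda>x. outer_sum (f x) (g x)) \<longlongrightarrow> outer_sum u v) F"
  unfolding outer_sum_def
proof (rule tendsto_vec_lambda)
  fix k
  show "((\<lambda>x. if k \<in> P then f x $ fst k + g x $ snd k else 0)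
      \<longlongrightarrow> (if k \<in> P then u $ fst k + v $ snd k else 0)) F"
    using assms by (cases "k \<in> P") (simp_all add: tendsto_add tendsto_vec_nth)
qed

lemma linear_row_sums_on: "linear row_sums_on"
  by (rule linearI) (simp_all add: row_sums_on_def vec_eq_iff sum.distrib[symmetric]
      sum_distrib_left if_distrib cong: if_cong)

lemma linear_col_sums_on: "linear col_sums_on"
  by (rule linearI) (simp_all add: col_sums_on_def vec_eq_iff sum.distrib[symmetric]
      sum_distrib_left if_distrib cong: if_cong)

lemma linear_off_pattern: "linear off_pattern"
  by (rule linearI) (simp_all add: off_pattern_def vec_eq_iff)

lemma linear_marginal_part: "linear marginal_part"
proof -
  have "linear (\<lambda>x. outer_sum (row_sums_on x) (col_sums_on x))"
    by (rule linearI)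
       (simp_all add: linear_add[OF linear_row_sums_on] linear_add[OF linear_col_sums_on]
         linear_scale[OF linear_row_sums_on] linear_scale[OF linear_col_sums_on]
         outer_sum_add outer_sum_scaleR)
  then show ?thesis
    unfolding marginal_part_def[abs_def] by (intro linear_compose_add linear_off_pattern)
qed

lemma subspace_outer_sums: "subspace outer_sums"
  unfolding subspace_def outer_sums_def
proof (intro conjI ballI allI)
  have "outer_sum 0 0 = 0"
    by (simp add: outer_sum_def vec_eq_iff)
  then show "0 \<in> {outer_sum u v |u v. True}"
    by (metis (mono_tags) mem_Collect_eq)
  fix x y assume "x \<in> {outer_sum u v |u v. True}" and "y \<in> {outer_sum u v |u v. True}"
  then obtain u v u' v' where "x = outer_sum u v" and "y = outer_sum u' v'"
    by blast
  then show "x + y \<in> {outer_sum u v |u v. True}"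
    using outer_sum_add[of u u' v v', symmetric] by blast
next
  fix c :: real and x assume "x \<in> {outer_sum u v |u v. True}"
  then obtain u v where "x = outer_sum u v"
    by blast
  then show "c *\<^sub>R x \<in> {outer_sum u v |u v. True}"
    using outer_sum_scaleR[of c u v, symmetric] by blast
qed

lemma outer_sum_in_outer_sums: "outer_sum u v \<in> outer_sums"
  by (auto simp: outer_sums_def)

lemma outer_sums_nth_off: "y \<in> outer_sums \<Longrightarrow> k \<notin> P \<Longrightarrow> y $ k = 0"
  by (auto simp: outer_sums_def outer_sum_def)

lemma perp_proj_outer_sums_nth_off:
  assumes "k \<notin> P"
  shows "perp_proj outer_sums x $ k = x $ k"
proof -
  have "(x - perp_proj outer_sums x) $ k = 0"
    by (rule outer_sums_nth_off[OF perp_proj_diff_in[OF subspace_outer_sums] assms])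
  then show ?thesis
    by simp
qed

lemma marginal_part_nth_off: "k \<notin> P \<Longrightarrow> marginal_part x $ k = x $ k"
  by (simp add: marginal_part_def off_pattern_def outer_sum_def)

lemma marginal_part_vanishing_off:
  "(\<And>k. k \<notin> P \<Longrightarrow> x $ k = 0) \<Longrightarrow>
    marginal_part x = outer_sum (row_sums_on x) (col_sums_on x)"
  by (simp add: marginal_part_def off_pattern_def vec_eq_iff)

text \<open>Equal chart values force the outer-sum parts to agree, so \<open>x - y\<close> has vanishing
  row and column sums on \<open>P\<close> and is therefore orthogonal to \<open>z - z'\<close>, which lies in
  \<open>outer_sums\<close>.\<close>

lemma marginal_part_perp_proj_eqD:
  assumes eq: "marginal_part x + perp_proj outer_sums z = marginal_part y + perp_proj outer_sums z'"
    and z: "\<And>k. k \<notin> P \<Longrightarrow> z $ k = 0" and z': "\<And>k. k \<notin> P \<Longrightarrow> z' $ k = 0"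
  shows "\<And>k. k \<notin> P \<Longrightarrow> x $ k = y $ k" and "(x - y) \<bullet> (z - z') = 0"
proof -
  let ?\<Pi> = "perp_proj outer_sums" and ?D = "x - y"
  have T: "subspace outer_sums"
    by (rule subspace_outer_sums)
  show off: "x $ k = y $ k" if "k \<notin> P" for k
    using arg_cong[OF eq, of "\<lambda>v. v $ k"] that z z'
    by (simp add: marginal_part_nth_off perp_proj_outer_sums_nth_off)
  let ?t = "outer_sum (row_sums_on ?D) (col_sums_on ?D)"
  have "?t = marginal_part ?D"
    using off by (intro marginal_part_vanishing_off[symmetric]) simp
  also have "\<dots> = marginal_part x - marginal_part y"
    by (rule linear_diff[OF linear_marginal_part])
  also have "\<dots> = (marginal_part x + ?\<Pi> z) - (marginal_part y + ?\<Pi> z)"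
    by simp
  also have "\<dots> = ?\<Pi> z' - ?\<Pi> z"
    unfolding eq by simp
  also have "\<dots> = ?\<Pi> (z' - z)"
    by (rule linear_diff[OF linear_perp_proj[OF T], symmetric])
  finally have t: "?t = ?\<Pi> (z' - z)" .
  have "?\<Pi> (z' - z) \<bullet> ?t = 0"
    by (rule perp_proj_orthogonal[OF T outer_sum_in_outer_sums])
  then have t0: "?t = 0"
    unfolding t[symmetric] by simp
  then have "?\<Pi> (z' - z) = 0"
    using t by simp
  then obtain u v where uv: "z' - z = outer_sum u v"
    using perp_proj_eq_0_iff[OF T] by (auto simp: outer_sums_def)
  have "row_sums_on ?D \<bullet> row_sums_on ?D + col_sums_on ?D \<bullet> col_sums_on ?D = ?t \<bullet> ?D"
    by (simp add: outer_sum_inner)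
  then have "row_sums_on ?D = 0" and "col_sums_on ?D = 0"
    using t0 by (simp_all add: add_nonneg_eq_0_iff)
  then have "(z' - z) \<bullet> ?D = 0"
    by (simp add: uv outer_sum_inner)
  then show "?D \<bullet> (z - z') = 0"
    by (simp add: inner_commute inner_diff_right inner_diff_left)
qed

lemma diff_mult_ln_diff_nonneg:
  fixes a b :: real
  assumes "0 < a" and "0 < b"
  shows "0 \<le> (a - b) * (ln a - ln b)"
proof (cases "a \<le> b")
  case True
  then show ?thesis using assms by (simp add: mult_nonpos_nonpos)
qed (use assms in simp)

lemma sinkhorn_chart_inj: "inj_on sinkhorn_chart pos_on"
proof (rule inj_onI)
  fix x y assume x: "x \<in> pos_on" and y: "y \<in> pos_on" and eq: "sinkhorn_chart x = sinkhorn_chart y"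
  let ?d = "\<lambda>k. (x $ k - y $ k) * (log_on x - log_on y) $ k"
  note eq' = eq[unfolded sinkhorn_chart_def]
  have off: "x $ k = y $ k" if "k \<notin> P" for k
    by (rule marginal_part_perp_proj_eqD(1)[OF eq' _ _ that]) (simp_all add: log_on_def)
  have "(\<Sum>k\<in>UNIV. ?d k) = (x - y) \<bullet> (log_on x - log_on y)"
    by (simp add: inner_vec_def)
  also have "\<dots> = 0"
    by (rule marginal_part_perp_proj_eqD(2)[OF eq']) (simp_all add: log_on_def)
  finally have sum0: "(\<Sum>k\<in>UNIV. ?d k) = 0" .
  have "0 \<le> ?d k" for k
    using x y by (simp add: log_on_def pos_on_def diff_mult_ln_diff_nonneg)
  then have d0: "?d k = 0" for k
    using sum_nonneg_0[OF finite_class.finite _ sum0 UNIV_I] by blast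
  have "x $ k = y $ k" if "k \<in> P" for k
  proof -
    have "0 < x $ k" and "0 < y $ k"
      using x y that by (simp_all add: pos_on_def)
    moreover have "(x $ k - y $ k) * (ln (x $ k) - ln (y $ k)) = 0"
      using d0[of k] that by (simp add: log_on_def)
    ultimately show ?thesis
      by auto
  qed
  with off show "x = y"
    by (auto simp: vec_eq_iff)
qed

lemma inj_sinkhorn_chart_deriv:
  assumes x: "x \<in> pos_on"
  shows "inj (sinkhorn_chart_deriv x)"
proof -
  let ?q = "\<lambda>h. \<chi> k. if k \<in> P then h $ k / x $ k else 0"
  have "linear (sinkhorn_chart_deriv x)"
    unfolding sinkhorn_chart_deriv_def[abs_def]
    by (intro linear_compose_add linear_marginal_part
        linear_compose[OF _ linear_perp_proj[OF subspace_outer_sums], unfolded o_def])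
       (rule linearI, simp_all add: vec_eq_iff add_divide_distrib)
  moreover have "h = 0" if h0: "sinkhorn_chart_deriv x h = 0" for h
  proof -
    have eq: "marginal_part h + perp_proj outer_sums (?q h) = marginal_part 0 + perp_proj outer_sums 0"
      using h0 linear_0[OF linear_marginal_part] linear_0[OF linear_perp_proj[OF subspace_outer_sums]]
      by (simp add: sinkhorn_chart_deriv_def)
    have off: "h $ k = 0" if "k \<notin> P" for k
      using marginal_part_perp_proj_eqD(1)[OF eq _ _ that] by simp
    have "(\<Sum>k\<in>UNIV. h $ k * ?q h $ k) = (h - 0) \<bullet> (?q h - 0)"
      by (simp add: inner_vec_def)
    also have "\<dots> = 0"
      by (rule marginal_part_perp_proj_eqD(2)[OF eq]) simp_all
    finally have sum0: "(\<Sum>k\<in>UNIV. h $ k * ?q h $ k) = 0" .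
    have "0 \<le> h $ k * ?q h $ k" for k
      using x by (auto simp: pos_on_def)
    then have hq0: "h $ k * ?q h $ k = 0" for k
      using sum_nonneg_0[OF finite_class.finite _ sum0 UNIV_I] by blast
    have "h $ k = 0" if "k \<in> P" for k
    proof -
      have "h $ k * (h $ k / x $ k) = 0"
        using hq0[of k] that by simp
      moreover have "0 < x $ k"
        using x that by (simp add: pos_on_def)
      ultimately show ?thesis
        by simp
    qed
    with off show "h = 0"
      by (auto simp: vec_eq_iff)
  qed
  ultimately show ?thesis
    by (simp add: linear_injective_0)
qed

lemma open_pos_on: "open pos_on"
proof -
  have "pos_on = (\<Inter>k\<in>P. {x. 0 < x $ k})"
    by (auto simp: pos_on_def)
  then show ?thesis
    by (simp add: open_INT open_halfspace_component_gt_cart)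
qed

lemma sinkhorn_chart_has_derivative:
  assumes "x \<in> pos_on"
  shows "(sinkhorn_chart has_derivative sinkhorn_chart_deriv x) (at x)"
proof -
  have "((\<lambda>y. if k \<in> P then ln (y $ k) else 0) has_derivative
      (\<lambda>h. if k \<in> P then h $ k / x $ k else 0)) (at x)" for k
  proof (cases "k \<in> P")
    case True
    then have "0 < x $ k"
      using assms by (simp add: pos_on_def)
    then have "((\<lambda>y. ln (y $ k)) has_derivative (\<lambda>h. inverse (x $ k) * h $ k)) (at x)"
      using has_derivative_compose[OF bounded_linear_imp_has_derivative[OF bounded_linear_vec_nth]
          DERIV_ln[unfolded has_field_derivative_def]] by blast
    with True show ?thesis
      by (simp add: divide_inverse mult.commute)
  qed simp
  then have "(log_on has_derivative (\<lambda>h. \<chi> k. if k \<in> P then h $ k / x $ k else 0)) (at x)"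
    unfolding log_on_def[abs_def] by (rule has_derivative_vec_lambda)
  then show ?thesis
    unfolding sinkhorn_chart_def[abs_def] sinkhorn_chart_deriv_def
    by (intro has_derivative_add linear_imp_has_derivative linear_marginal_part
        bounded_linear.has_derivative[OF linear_perp_proj[OF subspace_outer_sums,
          unfolded linear_conv_bounded_linear]])
qed

lemma Ck_on_log_on: "Ck_on n pos_on log_on"
proof -
  have op: "open pos_on"
    by (rule open_pos_on)
  have "Ck_on n pos_on (\<lambda>x. if k \<in> P then ln (x $ k) else 0)" for k
  proof (cases "k \<in> P")
    case True
    then show ?thesis
      using Ck_on_ln_compose[OF op Ck_on_vec_nth[OF op Ck_on_ident[OF op], where i=k]]
      by (simp add: pos_on_def)
  qed (simp add: Ck_on_const[OF op])
  then show ?thesis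
    unfolding log_on_def[abs_def] by (rule Ck_on_vec_lambda[OF op])
qed

lemma Ck_on_sinkhorn_chart: "Ck_on n pos_on sinkhorn_chart"
proof -
  have op: "open pos_on"
    by (rule open_pos_on)
  have "Ck_on n pos_on (\<lambda>x. perp_proj outer_sums (log_on x))"
    by (rule Ck_on_linear_compose[OF op
          linear_perp_proj[OF subspace_outer_sums, unfolded linear_conv_bounded_linear] Ck_on_log_on])
  moreover have "Ck_on n pos_on marginal_part"
    by (rule Ck_on_linear[OF op linear_marginal_part[unfolded linear_conv_bounded_linear]])
  ultimately show ?thesis
    unfolding sinkhorn_chart_def[abs_def] by (intro Ck_on_add[OF op])
qed

lemma open_sinkhorn_chart_image: "open (sinkhorn_chart ` pos_on)"
  by (rule open_image_if_Ck_on[OF open_pos_on sinkhorn_chart_inj Ck_on_sinkhorn_chart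
        sinkhorn_chart_has_derivative inj_sinkhorn_chart_deriv])

lemma Ck_on_inv_sinkhorn_chart: "Ck_on n (sinkhorn_chart ` pos_on) (inv_into pos_on sinkhorn_chart)"
  by (rule Ck_on_inv_into[OF open_pos_on sinkhorn_chart_inj Ck_on_sinkhorn_chart
        sinkhorn_chart_has_derivative inj_sinkhorn_chart_deriv])

end

section \<open>The Sinkhorn potential\<close>

text \<open>Up to a constant depending on \<open>X\<close> only, \<open>sinkhorn_potential X B\<close> is the generalised
  Kullback-Leibler divergence \<open>KL(X || B)\<close>.\<close>

definition sinkhorn_potential :: "real^'m::finite^'n::finite \<Rightarrow> real^'m^'n \<Rightarrow> real" where
  "sinkhorn_potential X B = (\<Sum>i\<in>UNIV. \<Sum>j\<in>UNIV. B $ i $ j - X $ i $ j * ln (B $ i $ j))"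

definition kl_divergence :: "real^'k::finite \<Rightarrow> real^'k \<Rightarrow> real" where
  "kl_divergence r s = (\<Sum>i\<in>UNIV. s $ i - r $ i + r $ i * ln (r $ i / s $ i))"

lemma kl_term_nonneg:
  fixes r s :: real
  assumes "0 < r" and "0 < s"
  shows "0 \<le> s - r + r * ln (r / s)"
proof -
  have "r * ln (s / r) \<le> r * (s / r - 1)"
    using assms by (intro mult_left_mono ln_le_minus_one) auto
  also have "\<dots> = s - r"
    using assms by (simp add: field_simps)
  finally have "r * ln (s / r) \<le> s - r" .
  moreover have "r * ln (r / s) = - (r * ln (s / r))"
    using assms by (simp add: ln_div algebra_simps)
  ultimately show ?thesis
    by linarith
qed

lemma kl_term_eq_0_imp_eq:
  fixes r s :: real
  assumes "0 < r" and "0 < s" and "s - r + r * ln (r / s) = 0"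
  shows "s = r"
proof -
  have "ln (r / s) = - ln (s / r)"
    using assms by (simp add: ln_div)
  then have "ln (s / r) = s / r - 1"
    using assms by (simp add: field_simps)
  then have "s / r = 1"
    using assms by (intro ln_eq_minus_one) simp_all
  then show ?thesis
    using assms by simp
qed

lemma kl_divergence_nonneg:
  "(\<And>i. 0 < r $ i) \<Longrightarrow> (\<And>i. 0 < s $ i) \<Longrightarrow> 0 \<le> kl_divergence r s"
  unfolding kl_divergence_def by (intro sum_nonneg kl_term_nonneg)

lemma kl_divergence_eq_0_imp_eq:
  assumes r: "\<And>i. 0 < r $ i" and s: "\<And>i. 0 < s $ i" and kl: "kl_divergence r s = 0"
  shows "s = r"
proof -
  have "s $ i - r $ i + r $ i * ln (r $ i / s $ i) = 0" for i
    using sum_nonneg_0[OF finite_class.finite _ kl[unfolded kl_divergence_def] UNIV_I]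
      kl_term_nonneg[OF r s] by blast
  then show ?thesis
    using kl_term_eq_0_imp_eq[OF r s] by (simp add: vec_eq_iff)
qed

lemma sinkhorn_potential_row_scale:
  assumes X: "row_sums X = r" and r: "\<And>i. 0 < r $ i" and B: "\<And>i. 0 < row_sums B $ i"
    and XB: "\<And>i j. X $ i $ j \<noteq> 0 \<Longrightarrow> 0 < B $ i $ j"
  shows "sinkhorn_potential X (row_scale r B) = sinkhorn_potential X B - kl_divergence r (row_sums B)"
proof -
  let ?R = "\<lambda>i. row_sums B $ i"
  let ?a = "\<lambda>i. r $ i / ?R i"
  have a: "0 < ?a i" for i
    using r B by simp
  have scale: "row_scale r B $ i $ j = ?a i * B $ i $ j" for i j
    by (simp add: row_scale_def row_sums_def)
  have log: "X $ i $ j * ln (?a i * B $ i $ j) = X $ i $ j * ln (?a i) + X $ i $ j * ln (B $ i $ j)"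
    for i j
  proof (cases "X $ i $ j = 0")
    case False
    then have "ln (?a i * B $ i $ j) = ln (?a i) + ln (B $ i $ j)"
      using a[of i] XB[of i j] by (intro ln_mult_pos) auto
    then show ?thesis
      by (simp only: distrib_left)
  qed simp
  have row: "(\<Sum>j\<in>UNIV. row_scale r B $ i $ j - X $ i $ j * ln (row_scale r B $ i $ j))
      = (\<Sum>j\<in>UNIV. B $ i $ j - X $ i $ j * ln (B $ i $ j)) - (?R i - r $ i + r $ i * ln (?a i))"
    for i
  proof -
    have "(\<Sum>j\<in>UNIV. row_scale r B $ i $ j - X $ i $ j * ln (row_scale r B $ i $ j))
        = (\<Sum>j\<in>UNIV. ?a i * B $ i $ j - X $ i $ j * ln (?a i) - X $ i $ j * ln (B $ i $ j))"
      unfolding scale log by (simp add: algebra_simps)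
    also have "\<dots> = ?a i * ?R i - (\<Sum>j\<in>UNIV. X $ i $ j) * ln (?a i)
        - (\<Sum>j\<in>UNIV. X $ i $ j * ln (B $ i $ j))"
      by (simp add: sum_subtractf sum_distrib_left sum_distrib_right row_sums_def)
    also have "\<dots> = r $ i - r $ i * ln (?a i) - (\<Sum>j\<in>UNIV. X $ i $ j * ln (B $ i $ j))"
      using B[of i] X by (simp add: row_sums_def vec_eq_iff)
    finally show ?thesis
      by (simp add: sum_subtractf row_sums_def)
  qed
  have "sinkhorn_potential X (row_scale r B)
      = (\<Sum>i\<in>UNIV. (\<Sum>j\<in>UNIV. B $ i $ j - X $ i $ j * ln (B $ i $ j))
          - (?R i - r $ i + r $ i * ln (?a i)))"
    unfolding sinkhorn_potential_def by (simp only: row)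
  also have "\<dots> = sinkhorn_potential X B - kl_divergence r (row_sums B)"
    unfolding sinkhorn_potential_def kl_divergence_def by (rule sum_subtractf)
  finally show ?thesis .
qed

lemma col_scale_eq_transpose: "col_scale c B = transpose (row_scale c (transpose B))"
  by (simp add: col_scale_def row_scale_def transpose_def vec_eq_iff)

lemma col_sums_eq_row_sums_transpose: "col_sums B = row_sums (transpose B)"
  by (simp add: col_sums_def row_sums_def transpose_def)

lemma sinkhorn_potential_transpose:
  "sinkhorn_potential (transpose X) (transpose B) = sinkhorn_potential X B"
  unfolding sinkhorn_potential_def transpose_def by simp (rule sum.swap)

lemma sinkhorn_potential_col_scale:
  assumes "col_sums X = c" and "\<And>j. 0 < c $ j" and "\<And>j. 0 < col_sums B $ j"
    and "\<And>i j. X $ i $ j \<noteq> 0 \<Longrightarrow> 0 < B $ i $ j"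
  shows "sinkhorn_potential X (col_scale c B) = sinkhorn_potential X B - kl_divergence c (col_sums B)"
proof -
  have "sinkhorn_potential X (col_scale c B)
      = sinkhorn_potential (transpose X) (row_scale c (transpose B))"
    using sinkhorn_potential_transpose[of "transpose X" "row_scale c (transpose B)"]
    by (simp add: col_scale_eq_transpose)
  also have "\<dots> = sinkhorn_potential (transpose X) (transpose B) - kl_divergence c (row_sums (transpose B))"
    using assms
    by (intro sinkhorn_potential_row_scale) (simp_all add: col_sums_eq_row_sums_transpose transpose_def)
  finally show ?thesis
    by (simp add: sinkhorn_potential_transpose col_sums_eq_row_sums_transpose)
qed

lemma sinkhorn_potential_ge:
  assumes X: "\<And>i j. 0 \<le> X $ i $ j" and B: "\<And>i j. 0 \<le> B $ i $ j"
    and XB: "\<And>i j. X $ i $ j \<noteq> 0 \<Longrightarrow> 0 < B $ i $ j"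
  shows "sinkhorn_potential X X \<le> sinkhorn_potential X B"
  unfolding sinkhorn_potential_def
proof (intro sum_mono)
  fix i j
  show "X $ i $ j - X $ i $ j * ln (X $ i $ j) \<le> B $ i $ j - X $ i $ j * ln (B $ i $ j)"
  proof (cases "X $ i $ j = 0")
    case False
    then have x: "0 < X $ i $ j" and b: "0 < B $ i $ j"
      using X[of i j] XB[of i j] by auto
    have "X $ i $ j * ln (B $ i $ j / X $ i $ j) \<le> X $ i $ j * (B $ i $ j / X $ i $ j - 1)"
      using x b by (intro mult_left_mono ln_le_minus_one) auto
    then show ?thesis
      using x b by (simp add: ln_div right_diff_distrib)
  qed (simp add: B)
qed

lemma sinkhorn_potential_bounded_imp_entry_ge:
  assumes B: "\<And>i j. 0 \<le> B $ i $ j" and X: "\<And>i j. 0 \<le> X $ i $ j"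
    and XB: "\<And>i j. X $ i $ j \<noteq> 0 \<Longrightarrow> 0 < B $ i $ j"
    and bound: "\<And>i j. B $ i $ j \<le> C" and K: "sinkhorn_potential X B \<le> K"
    and Xij: "0 < X $ i $ j"
  shows "exp (- (C * (\<Sum>k\<in>UNIV. \<Sum>l\<in>UNIV. X $ k $ l) + K) / X $ i $ j) \<le> B $ i $ j"
proof -
  let ?t = "\<lambda>k l. X $ k $ l * C - X $ k $ l * ln (B $ k $ l)"
  have t_nonneg: "0 \<le> ?t k l" for k l
  proof (cases "X $ k $ l = 0")
    case False
    then have "0 < B $ k $ l"
      using XB by blast
    then have "ln (B $ k $ l) \<le> C"
      using ln_le_minus_one[of "B $ k $ l"] bound[of k l] by simp
    then show ?thesis
      using X[of k l] by (simp add: mult_left_mono flip: right_diff_distrib)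
  qed simp
  have "(\<Sum>k\<in>UNIV. \<Sum>l\<in>UNIV. ?t k l)
      = C * (\<Sum>k\<in>UNIV. \<Sum>l\<in>UNIV. X $ k $ l) + sinkhorn_potential X B
        - (\<Sum>k\<in>UNIV. \<Sum>l\<in>UNIV. B $ k $ l)"
    by (simp add: sinkhorn_potential_def sum_subtractf sum_distrib_left algebra_simps)
  also have "\<dots> \<le> C * (\<Sum>k\<in>UNIV. \<Sum>l\<in>UNIV. X $ k $ l) + K"
  proof -
    have "0 \<le> (\<Sum>k\<in>UNIV. \<Sum>l\<in>UNIV. B $ k $ l)"
      by (intro sum_nonneg B)
    then show ?thesis
      using K by linarith
  qed
  finally have sum_t:
    "(\<Sum>k\<in>UNIV. \<Sum>l\<in>UNIV. ?t k l) \<le> C * (\<Sum>k\<in>UNIV. \<Sum>l\<in>UNIV. X $ k $ l) + K" .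
  have "?t i j \<le> (\<Sum>l\<in>UNIV. ?t i l)"
    by (intro member_le_sum t_nonneg) simp_all
  also have "\<dots> \<le> (\<Sum>k\<in>UNIV. \<Sum>l\<in>UNIV. ?t k l)"
    by (intro member_le_sum sum_nonneg t_nonneg) simp_all
  finally have "?t i j \<le> C * (\<Sum>k\<in>UNIV. \<Sum>l\<in>UNIV. X $ k $ l) + K"
    using sum_t by linarith
  moreover have "0 \<le> X $ i $ j * C"
    using X[of i j] B[of i j] bound[of i j] by simp
  ultimately have "- (C * (\<Sum>k\<in>UNIV. \<Sum>l\<in>UNIV. X $ k $ l) + K) \<le> X $ i $ j * ln (B $ i $ j)"
    by linarith
  then have "- (C * (\<Sum>k\<in>UNIV. \<Sum>l\<in>UNIV. X $ k $ l) + K) / X $ i $ j \<le> ln (B $ i $ j)"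
    using Xij by (simp add: divide_le_eq mult.commute)
  then show ?thesis
    using XB[of i j] Xij by (simp add: ln_ge_iff)
qed


lemma has_pattern_nonneg: "has_pattern P B \<Longrightarrow> 0 \<le> B $ i $ j"
  by (simp add: has_pattern_def)

lemma has_pattern_pos: "has_pattern P B \<Longrightarrow> (i, j) \<in> P \<Longrightarrow> 0 < B $ i $ j"
  by (simp add: has_pattern_def)

lemma has_pattern_zero: "has_pattern P B \<Longrightarrow> (i, j) \<notin> P \<Longrightarrow> B $ i $ j = 0"
  unfolding has_pattern_def by (metis less_eq_real_def)

definition diag_scaled :: "real^'m::finite^'n::finite \<Rightarrow> real^'m^'n \<Rightarrow> bool" where
  "diag_scaled A B \<longleftrightarrow> (\<exists>u v. \<forall>i j. B $ i $ j = exp (u $ i + v $ j) * A $ i $ j)"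

lemma diag_scaled_refl: "diag_scaled A A"
  unfolding diag_scaled_def by (intro exI[of _ 0]) simp

lemma diag_scaled_row_scale:
  assumes "diag_scaled A B" and "\<And>i. 0 < r $ i" and "\<And>i. 0 < row_sums B $ i"
  shows "diag_scaled A (row_scale r B)"
proof -
  obtain u v where uv: "\<And>i j. B $ i $ j = exp (u $ i + v $ j) * A $ i $ j"
    using assms(1) by (auto simp: diag_scaled_def)
  let ?u = "\<chi> i. u $ i + ln (r $ i / row_sums B $ i)"
  have "row_scale r B $ i $ j = exp (?u $ i + v $ j) * A $ i $ j" for i j
    using assms(2,3)[of i] by (simp add: row_scale_def row_sums_def uv exp_add)
  then show ?thesis
    unfolding diag_scaled_def by blast
qed

lemma diag_scaled_col_scale:
  assumes "diag_scaled A B" and "\<And>j. 0 < c $ j" and "\<And>j. 0 < col_sums B $ j"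
  shows "diag_scaled A (col_scale c B)"
proof -
  obtain u v where uv: "\<And>i j. B $ i $ j = exp (u $ i + v $ j) * A $ i $ j"
    using assms(1) by (auto simp: diag_scaled_def)
  let ?v = "\<chi> j. v $ j + ln (c $ j / col_sums B $ j)"
  have "col_scale c B $ i $ j = exp (u $ i + ?v $ j) * A $ i $ j" for i j
    using assms(2,3)[of j] by (simp add: col_scale_def col_sums_def uv exp_add)
  then show ?thesis
    unfolding diag_scaled_def by blast
qed

lemma has_pattern_diag_scaled: "has_pattern P A \<Longrightarrow> diag_scaled A B \<Longrightarrow> has_pattern P B"
  unfolding diag_scaled_def has_pattern_def by (auto simp: zero_less_mult_iff)

lemma col_sums_col_scale:
  assumes "\<And>j. 0 < col_sums B $ j"
  shows "col_sums (col_scale c B) = c"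
proof -
  have "col_sums (col_scale c B) $ j = c $ j * col_sums B $ j / col_sums B $ j" for j
    by (simp add: col_sums_def col_scale_def sum_distrib_left sum_divide_distrib)
  then show ?thesis
    using assms by (simp add: vec_eq_iff less_imp_neq[symmetric])
qed

lemma tendsto_row_sums:
  "(f \<longlongrightarrow> B) F \<Longrightarrow> ((\<lambda>x. row_sums (f x)) \<longlongrightarrow> row_sums B) F"
  unfolding row_sums_def by (intro tendsto_vec_lambda tendsto_sum tendsto_vec_nth)

definition vec_of_matrix :: "real^'m::finite^'n::finite \<Rightarrow> real^('n \<times> 'm)" where
  "vec_of_matrix M = (\<chi> k. M $ fst k $ snd k)"

definition matrix_of_vec :: "real^('n::finite \<times> 'm::finite) \<Rightarrow> real^'m^'n" where
  "matrix_of_vec x = (\<chi> i j. x $ (i, j))"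

lemma vec_of_matrix_nth [simp]: "vec_of_matrix M $ (i, j) = M $ i $ j"
  by (simp add: vec_of_matrix_def)

lemma matrix_of_vec_of_matrix [simp]: "matrix_of_vec (vec_of_matrix M) = M"
  by (simp add: vec_of_matrix_def matrix_of_vec_def vec_eq_iff)

lemma linear_vec_of_matrix: "linear vec_of_matrix"
  by (rule linearI) (simp_all add: vec_of_matrix_def vec_eq_iff)

lemma linear_matrix_of_vec: "linear matrix_of_vec"
  by (rule linearI) (simp_all add: matrix_of_vec_def vec_eq_iff)

lemma vec_of_matrix_in_pos_on: "has_pattern P B \<Longrightarrow> vec_of_matrix B \<in> pos_on P"
  by (auto simp: pos_on_def has_pattern_def)

lemma sinkhorn_chart_vec_of_matrix:
  assumes "has_pattern P B"
  shows "sinkhorn_chart P (vec_of_matrix B)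
    = outer_sum P (row_sums B) (col_sums B) + perp_proj (outer_sums P) (log_on P (vec_of_matrix B))"
proof -
  have off: "vec_of_matrix B $ k = 0" if "k \<notin> P" for k
    using has_pattern_zero[OF assms, of "fst k" "snd k"] that by (simp add: vec_of_matrix_def)
  have "row_sums_on P (vec_of_matrix B) = row_sums B" and "col_sums_on P (vec_of_matrix B) = col_sums B"
    using has_pattern_zero[OF assms]
    by (auto simp: row_sums_on_def col_sums_on_def row_sums_def col_sums_def vec_eq_iff
        intro!: sum.cong)
  with off show ?thesis
    by (simp add: sinkhorn_chart_def marginal_part_vanishing_off)
qed

lemma perp_proj_log_on_diag_scaled:
  assumes A: "has_pattern P A" and "diag_scaled A B"
  shows "perp_proj (outer_sums P) (log_on P (vec_of_matrix B))
    = perp_proj (outer_sums P) (log_on P (vec_of_matrix A))"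
proof -
  obtain u v where uv: "\<And>i j. B $ i $ j = exp (u $ i + v $ j) * A $ i $ j"
    using assms(2) by (auto simp: diag_scaled_def)
  have "log_on P (vec_of_matrix B) = log_on P (vec_of_matrix A) + outer_sum P u v"
    using has_pattern_pos[OF A]
    by (auto simp: vec_eq_iff log_on_def outer_sum_def vec_of_matrix_def uv ln_mult_pos)
  then show ?thesis
    by (simp add: perp_proj_add_in[OF subspace_outer_sums] outer_sum_in_outer_sums)
qed

section \<open>Convergence of Sinkhorn scaling\<close>

lemma bounded_unique_limit_point_imp_tendsto:
  fixes f :: "nat \<Rightarrow> 'a::heine_borel"
  assumes bounded: "bounded (range f)"
    and unique: "\<And>\<sigma> l. strict_mono \<sigma> \<Longrightarrow> (f \<circ> \<sigma>) \<longlonglongrightarrow> l \<Longrightarrow>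
      l = L"
  shows "f \<longlonglongrightarrow> L"
proof (rule ccontr)
  assume "\<not> f \<longlonglongrightarrow> L"
  then obtain e where e: "e > 0" and "\<forall>N. \<exists>n\<ge>N. \<not> dist (f n) L < e"
    unfolding lim_sequentially by blast
  then have "infinite {n. \<not> dist (f n) L < e}"
    unfolding infinite_nat_iff_unbounded_le by blast
  then obtain \<rho> :: "nat \<Rightarrow> nat"
    where \<rho>: "strict_mono \<rho>" "\<And>n. \<rho> n \<in> {n. \<not> dist (f n) L < e}"
    using infinite_enumerate by blast
  have "bounded (range (f \<circ> \<rho>))"
    using bounded by (rule bounded_subset) auto
  then obtain l \<tau> where \<tau>: "strict_mono \<tau>" "((f \<circ> \<rho>) \<circ> \<tau>) \<longlonglongrightarrow> l"
    using bounded_imp_convergent_subsequence by blast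
  have "l = L"
    using unique[of "\<rho> \<circ> \<tau>" l] \<tau> \<rho>(1) by (simp add: strict_mono_o o_assoc)
  with \<tau>(2) e obtain N where "dist (f (\<rho> (\<tau> N))) L < e"
    unfolding lim_sequentially by auto
  then show False
    using \<rho>(2)[of "\<tau> N"] by simp
qed


locale sinkhorn_problem =
  fixes P :: "('n::finite \<times> 'm::finite) set" and A X :: "real^'m^'n"
    and r :: "real^'n" and c :: "real^'m"
  assumes pattern_A: "has_pattern P A" and pattern_X: "has_pattern P X"
    and row_sums_X: "row_sums X = r" and col_sums_X: "col_sums X = c"
    and r_pos: "\<And>i. 0 < r $ i" and c_pos: "\<And>j. 0 < c $ j"
begin

lemma row_sums_pos:
  assumes "has_pattern P B"
  shows "0 < row_sums B $ i"
proof -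
  obtain j where "(i, j) \<in> P"
    using r_pos[of i] row_sums_X has_pattern_zero[OF pattern_X, of i]
    by (force simp: row_sums_def vec_eq_iff)
  then show ?thesis
    unfolding row_sums_def
    by (simp, intro sum_pos2[where i=j])
       (simp_all add: has_pattern_pos[OF assms] has_pattern_nonneg[OF assms])
qed

lemma col_sums_pos:
  assumes "has_pattern P B"
  shows "0 < col_sums B $ j"
proof -
  obtain i where "(i, j) \<in> P"
    using c_pos[of j] col_sums_X has_pattern_zero[OF pattern_X, of _ j]
    by (force simp: col_sums_def vec_eq_iff)
  then show ?thesis
    unfolding col_sums_def
    by (simp, intro sum_pos2[where i=i])
       (simp_all add: has_pattern_pos[OF assms] has_pattern_nonneg[OF assms])
qed

abbreviation iterate :: "nat \<Rightarrow> real^'m^'n" where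
  "iterate n \<equiv> sinkhorn_iter r c n A"

lemma iterate_Suc: "iterate (Suc n) = col_scale c (row_scale r (iterate n))"
  by (simp add: sinkhorn_iter_def)

lemma diag_scaled_iterate: "diag_scaled A (iterate n)"
  and has_pattern_iterate: "has_pattern P (iterate n)"
proof -
  show "diag_scaled A (iterate n)"
  proof (induction n)
    case 0
    then show ?case by (simp add: sinkhorn_iter_def diag_scaled_refl)
  next
    case (Suc n)
    have R: "diag_scaled A (row_scale r (iterate n))"
      by (rule diag_scaled_row_scale[OF Suc r_pos
            row_sums_pos[OF has_pattern_diag_scaled[OF pattern_A Suc]]])
    show ?case
      unfolding iterate_Suc
      by (rule diag_scaled_col_scale[OF R c_pos
            col_sums_pos[OF has_pattern_diag_scaled[OF pattern_A R]]])
  qed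
  then show "has_pattern P (iterate n)"
    by (rule has_pattern_diag_scaled[OF pattern_A])
qed

lemma has_pattern_row_scale_iterate: "has_pattern P (row_scale r (iterate n))"
  using has_pattern_diag_scaled[OF pattern_A diag_scaled_row_scale[OF diag_scaled_iterate r_pos
        row_sums_pos[OF has_pattern_iterate]]] .

lemma potential_iterate_Suc:
  "sinkhorn_potential X (iterate (Suc n)) + kl_divergence r (row_sums (iterate n))
    \<le> sinkhorn_potential X (iterate n)"
proof -
  let ?B = "iterate n"
  let ?C = "row_scale r ?B"
  have C: "has_pattern P ?C"
    by (rule has_pattern_row_scale_iterate)
  have supp: "0 < B $ i $ j" if "has_pattern P B" and "X $ i $ j \<noteq> 0" for B i j
    using that has_pattern_zero[OF pattern_X] has_pattern_pos by blast
  have "sinkhorn_potential X (iterate (Suc n))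
      = sinkhorn_potential X ?C - kl_divergence c (col_sums ?C)"
    unfolding iterate_Suc
    by (rule sinkhorn_potential_col_scale[OF col_sums_X c_pos col_sums_pos[OF C] supp[OF C]])
  also have "\<dots> \<le> sinkhorn_potential X ?C"
    using kl_divergence_nonneg[OF c_pos col_sums_pos[OF C]] by simp
  also have "\<dots> = sinkhorn_potential X ?B - kl_divergence r (row_sums ?B)"
    using row_sums_pos[OF has_pattern_iterate] supp[OF has_pattern_iterate]
    by (rule sinkhorn_potential_row_scale[OF row_sums_X r_pos])
  finally show ?thesis
    by simp
qed

lemma potential_iterate_le: "sinkhorn_potential X (iterate n) \<le> sinkhorn_potential X A"
proof (induction n)
  case (Suc n)
  then show ?case
    using potential_iterate_Suc[of n]
      kl_divergence_nonneg[OF r_pos row_sums_pos[OF has_pattern_iterate[of n]]] by linarith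
qed (simp add: sinkhorn_iter_def)

lemma kl_row_sums_iterate_tendsto_0: "(\<lambda>n. kl_divergence r (row_sums (iterate n))) \<longlonglongrightarrow> 0"
proof (rule summable_LIMSEQ_zero[OF summableI_nonneg_bounded])
  show "0 \<le> kl_divergence r (row_sums (iterate n))" for n
    by (rule kl_divergence_nonneg[OF r_pos row_sums_pos[OF has_pattern_iterate]])
  have partial: "(\<Sum>n<N. kl_divergence r (row_sums (iterate n))) + sinkhorn_potential X (iterate N)
      \<le> sinkhorn_potential X A" for N
  proof (induction N)
    case (Suc N)
    then show ?case
      using potential_iterate_Suc[of N] by simp
  qed (simp add: sinkhorn_iter_def)
  have lower: "sinkhorn_potential X X \<le> sinkhorn_potential X (iterate N)" for N
    using has_pattern_nonneg[OF pattern_X] has_pattern_nonneg[OF has_pattern_iterate]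
      has_pattern_zero[OF pattern_X] has_pattern_pos[OF has_pattern_iterate]
    by (intro sinkhorn_potential_ge) blast+
  then show "(\<Sum>n<N. kl_divergence r (row_sums (iterate n)))
      \<le> sinkhorn_potential X A - sinkhorn_potential X X" for N
    using partial[of N] lower[of N] by linarith
qed

lemma iterate_Suc_le: "iterate (Suc n) $ i $ j \<le> (\<Sum>j\<in>UNIV. c $ j)"
proof -
  let ?C = "row_scale r (iterate n)"
  have C: "has_pattern P ?C"
    by (rule has_pattern_row_scale_iterate)
  have "?C $ i $ j \<le> col_sums ?C $ j"
    unfolding col_sums_def by (simp, intro member_le_sum has_pattern_nonneg[OF C]) simp_all
  then have "c $ j * ?C $ i $ j / col_sums ?C $ j \<le> c $ j"
    using col_sums_pos[OF C, of j] c_pos[of j] by (simp add: divide_le_eq mult_left_le)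
  also have "\<dots> \<le> (\<Sum>j\<in>UNIV. c $ j)"
    using c_pos by (intro member_le_sum) (simp_all add: less_imp_le)
  finally show ?thesis
    by (simp add: iterate_Suc col_scale_def col_sums_def)
qed

lemma bounded_iterate_Suc: "bounded (range (\<lambda>n. iterate (Suc n)))"
  unfolding bounded_iff
proof (intro exI ballI)
  fix B assume "B \<in> range (\<lambda>n. iterate (Suc n))"
  then obtain n where B: "B = iterate (Suc n)"
    by blast
  have "norm B \<le> (\<Sum>i\<in>UNIV. norm (B $ i))"
    unfolding norm_vec_def by (rule L2_set_le_sum) simp
  also have "\<dots> \<le> (\<Sum>i\<in>UNIV. \<Sum>j\<in>UNIV. \<bar>B $ i $ j\<bar>)"
    by (intro sum_mono norm_le_l1_cart)
  also have "\<dots> \<le> (\<Sum>i\<in>(UNIV::'n set). \<Sum>j\<in>(UNIV::'m set). \<Sum>j\<in>UNIV. c $ j)"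
    using iterate_Suc_le has_pattern_nonneg[OF has_pattern_iterate] unfolding B
    by (intro sum_mono) simp
  finally show "norm B \<le> (\<Sum>i\<in>(UNIV::'n set). \<Sum>j\<in>(UNIV::'m set). \<Sum>j\<in>UNIV. c $ j)" .
qed

lemma iterate_Suc_ge:
  assumes "(i, j) \<in> P"
  obtains e where "0 < e" and "\<And>n. e \<le> iterate (Suc n) $ i $ j"
proof
  let ?C = "\<Sum>j\<in>UNIV. c $ j"
  show "0 < exp (- (?C * (\<Sum>k\<in>UNIV. \<Sum>l\<in>UNIV. X $ k $ l) + sinkhorn_potential X A) / X $ i $ j)"
    by simp
  show "exp (- (?C * (\<Sum>k\<in>UNIV. \<Sum>l\<in>UNIV. X $ k $ l) + sinkhorn_potential X A) / X $ i $ j)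
      \<le> iterate (Suc n) $ i $ j" for n
    using has_pattern_nonneg[OF has_pattern_iterate] has_pattern_nonneg[OF pattern_X]
      has_pattern_zero[OF pattern_X] has_pattern_pos[OF has_pattern_iterate]
      iterate_Suc_le potential_iterate_le has_pattern_pos[OF pattern_X assms]
    by (intro sinkhorn_potential_bounded_imp_entry_ge) blast+
qed


definition chart_target :: "real^('n \<times> 'm)" where
  "chart_target = outer_sum P r c + perp_proj (outer_sums P) (log_on P (vec_of_matrix A))"

lemma sinkhorn_chart_iterate_Suc:
  "sinkhorn_chart P (vec_of_matrix (iterate (Suc n)))
    = outer_sum P (row_sums (iterate (Suc n))) c + perp_proj (outer_sums P) (log_on P (vec_of_matrix A))"
proof -
  have "col_sums (iterate (Suc n)) = c"
    unfolding iterate_Suc by (rule col_sums_col_scale[OF col_sums_pos[OF has_pattern_row_scale_iterate]])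
  then show ?thesis
    using sinkhorn_chart_vec_of_matrix[OF has_pattern_iterate]
      perp_proj_log_on_diag_scaled[OF pattern_A diag_scaled_iterate] by simp
qed

lemma has_pattern_limit_point:
  assumes lim: "(\<lambda>k. iterate (Suc (\<sigma> k))) \<longlonglongrightarrow> l"
  shows "has_pattern P l"
  unfolding has_pattern_def
proof (intro allI conjI)
  fix i j
  have entries: "(\<lambda>k. iterate (Suc (\<sigma> k)) $ i $ j) \<longlonglongrightarrow> l $ i $ j"
    by (intro tendsto_vec_nth lim)
  show "0 \<le> l $ i $ j"
    by (rule LIMSEQ_le_const[OF entries]) (simp add: has_pattern_nonneg[OF has_pattern_iterate])
  show "0 < l $ i $ j \<longleftrightarrow> (i, j) \<in> P"
  proof
    assume "(i, j) \<in> P"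
    then obtain e where "0 < e" and "\<And>n. e \<le> iterate (Suc n) $ i $ j"
      by (rule iterate_Suc_ge) blast
    then show "0 < l $ i $ j"
      using LIMSEQ_le_const[OF entries, of e] by fastforce
  next
    assume "0 < l $ i $ j"
    moreover have "(i, j) \<notin> P \<Longrightarrow> l $ i $ j = 0"
      using entries has_pattern_zero[OF has_pattern_iterate] by (simp add: LIMSEQ_const_iff)
    ultimately show "(i, j) \<in> P"
      by auto
  qed
qed

lemma row_sums_limit_point:
  assumes \<sigma>: "strict_mono \<sigma>" and lim: "(\<lambda>k. iterate (Suc (\<sigma> k))) \<longlonglongrightarrow> l"
  shows "row_sums l = r"
proof (rule kl_divergence_eq_0_imp_eq[OF r_pos row_sums_pos[OF has_pattern_limit_point[OF lim]]])
  show "kl_divergence r (row_sums l) = 0"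
  proof (rule LIMSEQ_unique)
    show "(\<lambda>k. kl_divergence r (row_sums (iterate (Suc (\<sigma> k))))) \<longlonglongrightarrow> kl_divergence r (row_sums l)"
      unfolding kl_divergence_def
      using row_sums_pos[OF has_pattern_limit_point[OF lim]] r_pos
      by (intro tendsto_intros tendsto_vec_nth tendsto_row_sums lim) (auto simp: less_imp_neq[symmetric])
    have "strict_mono (Suc \<circ> \<sigma>)"
      using \<sigma> by (simp add: strict_mono_def)
    then show "(\<lambda>k. kl_divergence r (row_sums (iterate (Suc (\<sigma> k))))) \<longlonglongrightarrow> 0"
      using LIMSEQ_subseq_LIMSEQ[OF kl_row_sums_iterate_tendsto_0] by (simp add: o_def)
  qed
qed

lemma limit_point_iterate:
  assumes \<sigma>: "strict_mono \<sigma>" and lim: "(\<lambda>k. iterate (Suc (\<sigma> k))) \<longlonglongrightarrow> l"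
  shows "vec_of_matrix l \<in> pos_on P" and "sinkhorn_chart P (vec_of_matrix l) = chart_target"
proof -
  let ?S = "\<lambda>k. iterate (Suc (\<sigma> k))"
  show pos: "vec_of_matrix l \<in> pos_on P"
    by (rule vec_of_matrix_in_pos_on[OF has_pattern_limit_point[OF lim]])
  have "isCont (sinkhorn_chart P) (vec_of_matrix l)"
    using continuous_on_eq_continuous_at[OF open_pos_on]
      Ck_on_imp_continuous_on[OF Ck_on_sinkhorn_chart[where n=0]] pos
    by blast
  then have "(\<lambda>k. sinkhorn_chart P (vec_of_matrix (?S k))) \<longlonglongrightarrow> sinkhorn_chart P (vec_of_matrix l)"
    using lim by (intro isCont_tendsto_compose[where g="sinkhorn_chart P"])
      (simp_all add: vec_of_matrix_def tendsto_vec_lambda tendsto_vec_nth)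
  moreover have "(\<lambda>k. sinkhorn_chart P (vec_of_matrix (?S k))) \<longlonglongrightarrow> chart_target"
  proof -
    let ?w = "perp_proj (outer_sums P) (log_on P (vec_of_matrix A))"
    have "(\<lambda>k. outer_sum P (row_sums (?S k)) c + ?w) \<longlonglongrightarrow> outer_sum P (row_sums l) c + ?w"
      by (intro tendsto_add tendsto_const tendsto_outer_sum tendsto_row_sums lim)
    then show ?thesis
      unfolding sinkhorn_chart_iterate_Suc chart_target_def row_sums_limit_point[OF \<sigma> lim] .
  qed
  ultimately show "sinkhorn_chart P (vec_of_matrix l) = chart_target"
    by (rule LIMSEQ_unique)
qed

theorem sinkhorn_iter_tendsto:
  shows "chart_target \<in> sinkhorn_chart P ` pos_on P"
    and "(\<lambda>n. sinkhorn_iter r c n A)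
      \<longlonglongrightarrow> matrix_of_vec (inv_into (pos_on P) (sinkhorn_chart P) chart_target)"
proof -
  let ?L = "matrix_of_vec (inv_into (pos_on P) (sinkhorn_chart P) chart_target)"
  have limit: "l = ?L"
    if "strict_mono \<sigma>" and "((\<lambda>n. iterate (Suc n)) \<circ> \<sigma>) \<longlonglongrightarrow> l" for \<sigma> l
  proof -
    have "(\<lambda>k. iterate (Suc (\<sigma> k))) \<longlonglongrightarrow> l"
      using that(2) by (simp add: o_def)
    note lp = limit_point_iterate[OF that(1) this]
    then show ?thesis
      using inv_into_f_f[OF sinkhorn_chart_inj lp(1)] by simp
  qed
  obtain \<sigma> l where "strict_mono \<sigma>" and "((\<lambda>n. iterate (Suc n)) \<circ> \<sigma>) \<longlonglongrightarrow> l"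
    using bounded_imp_convergent_subsequence[OF bounded_iterate_Suc] by blast
  then show "chart_target \<in> sinkhorn_chart P ` pos_on P"
    using limit_point_iterate[of \<sigma> l] by (force simp: o_def)
  have "(\<lambda>n. iterate (Suc n)) \<longlonglongrightarrow> ?L"
    by (rule bounded_unique_limit_point_imp_tendsto[OF bounded_iterate_Suc limit])
  then show "(\<lambda>n. sinkhorn_iter r c n A) \<longlonglongrightarrow> ?L"
    by (rule LIMSEQ_imp_Suc)
qed

end


section \<open>Smoothness of the Sinkhorn limit\<close>

definition scaling_coords ::
    "('n::finite \<times> 'm::finite) set \<Rightarrow> real \<Rightarrow>
      (real^'m^'n) \<times> (real^'n) \<times> (real^'m) \<Rightarrow> real^('n \<times> 'm)"
  where "scaling_coords P lam z = outer_sum P (fst (snd z)) (snd (snd z))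
    + lam *\<^sub>R perp_proj (outer_sums P) (log_on P (vec_of_matrix (fst z)))"

definition sinkhorn_domain ::
    "('n::finite \<times> 'm::finite) set \<Rightarrow> real \<Rightarrow> ((real^'m^'n) \<times> (real^'n) \<times> (real^'m)) set"
  where "sinkhorn_domain P lam =
    {z. vec_of_matrix (fst z) \<in> pos_on P} \<inter> scaling_coords P lam -` (sinkhorn_chart P ` pos_on P)"

definition sinkhorn_extension ::
    "('n::finite \<times> 'm::finite) set \<Rightarrow> real \<Rightarrow>
      (real^'m^'n) \<times> (real^'n) \<times> (real^'m) \<Rightarrow> real^'m^'n"
  where "sinkhorn_extension P lam z =
    matrix_of_vec (inv_into (pos_on P) (sinkhorn_chart P) (scaling_coords P lam z))"

lemma has_pattern_entry_power:
  assumes "has_pattern P M"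
  shows "has_pattern P (entry_power lam M)"
proof -
  have "(i, j) \<in> P \<longleftrightarrow> M $ i $ j \<noteq> 0" for i j
    using assms by (auto simp: has_pattern_def less_le)
  then show ?thesis
    by (simp add: has_pattern_def entry_power_def)
qed

lemma log_on_entry_power:
  assumes "has_pattern P M"
  shows "log_on P (vec_of_matrix (entry_power lam M)) = lam *\<^sub>R log_on P (vec_of_matrix M)"
  using has_pattern_pos[OF assms]
  by (auto simp: vec_eq_iff log_on_def vec_of_matrix_def entry_power_def ln_powr)

lemma Phi_eq_inv_sinkhorn_chart:
  assumes M: "M \<in> pattern_matrices P" and rc: "(r, c) \<in> scalable_marginals P"
  shows "scaling_coords P lam (M, r, c) \<in> sinkhorn_chart P ` pos_on P"
    and "Phi lam (M, r, c)
      = matrix_of_vec (inv_into (pos_on P) (sinkhorn_chart P) (scaling_coords P lam (M, r, c)))"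
proof -
  have pM: "has_pattern P M"
    using M by (simp add: pattern_matrices_def)
  obtain X where "has_pattern P X" and "row_sums X = r" and "col_sums X = c"
    using rc by (auto simp: scalable_marginals_def exactly_scalable_def)
  moreover have "\<And>i. 0 < r $ i" and "\<And>j. 0 < c $ j"
    using rc by (auto simp: scalable_marginals_def)
  ultimately interpret sinkhorn_problem P "entry_power lam M" X r c
    using has_pattern_entry_power[OF pM] by unfold_locales
  have target: "chart_target = scaling_coords P lam (M, r, c)"
    unfolding chart_target_def scaling_coords_def log_on_entry_power[OF pM]
    by (simp add: linear_scale[OF linear_perp_proj[OF subspace_outer_sums]])
  show "scaling_coords P lam (M, r, c) \<in> sinkhorn_chart P ` pos_on P"
    using sinkhorn_iter_tendsto(1) unfolding target .
  show "Phi lam (M, r, c)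
      = matrix_of_vec (inv_into (pos_on P) (sinkhorn_chart P) (scaling_coords P lam (M, r, c)))"
    using limI[OF sinkhorn_iter_tendsto(2)] unfolding target
    by (simp add: Phi_def sinkhorn_limit_def)
qed

lemma
  fixes P :: "('n::finite \<times> 'm::finite) set"
  defines "U \<equiv> {z :: (real^'m^'n) \<times> (real^'n) \<times> (real^'m). vec_of_matrix (fst z) \<in> pos_on P}"
  shows open_pos_on_fst: "open U"
    and Ck_on_scaling_coords: "Ck_on k U (scaling_coords P lam)"
proof -
  have lin: "bounded_linear (\<lambda>z :: (real^'m^'n) \<times> (real^'n) \<times> (real^'m). vec_of_matrix (fst z))"
    by (rule bounded_linear_compose[OF linear_vec_of_matrix[unfolded linear_conv_bounded_linear]
          bounded_linear_fst])
  show op: "open U"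
    unfolding U_def using continuous_open_vimage[OF open_pos_on linear_continuous_at[OF lin]]
    by (simp add: vimage_def)
  have "Ck_on k U (\<lambda>z. log_on P (vec_of_matrix (fst z)))"
    by (rule Ck_on_compose[OF op open_pos_on _ Ck_on_log_on Ck_on_linear[OF op lin]])
       (auto simp: U_def)
  then have log_part: "Ck_on k U (\<lambda>z. lam *\<^sub>R perp_proj (outer_sums P) (log_on P (vec_of_matrix (fst z))))"
    by (intro Ck_on_scaleR[OF op Ck_on_const[OF op]] Ck_on_linear_compose[OF op
          linear_perp_proj[OF subspace_outer_sums, unfolded linear_conv_bounded_linear]])
  have marginal_part: "Ck_on k U (\<lambda>z. outer_sum P (fst (snd z)) (snd (snd z)))"
  proof (rule Ck_on_linear[OF op])
    have "linear (\<lambda>z :: (real^'m^'n) \<times> (real^'n) \<times> (real^'m).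
        outer_sum P (fst (snd z)) (snd (snd z)))"
      by (rule linearI) (simp_all add: outer_sum_add[symmetric] outer_sum_scaleR[symmetric])
    then show "bounded_linear (\<lambda>z :: (real^'m^'n) \<times> (real^'n) \<times> (real^'m).
        outer_sum P (fst (snd z)) (snd (snd z)))"
      by (simp add: linear_conv_bounded_linear)
  qed
  show "Ck_on k U (scaling_coords P lam)"
    unfolding scaling_coords_def[abs_def] by (rule Ck_on_add[OF op marginal_part log_part])
qed

lemma open_sinkhorn_domain: "open (sinkhorn_domain P lam)"
  unfolding sinkhorn_domain_def
  by (rule continuous_open_preimage[OF Ck_on_imp_continuous_on[OF Ck_on_scaling_coords]
        open_pos_on_fst open_sinkhorn_chart_image])

lemma Ck_on_sinkhorn_extension: "Ck_on k (sinkhorn_domain P lam) (sinkhorn_extension P lam)"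
proof -
  have "Ck_on k (sinkhorn_domain P lam)
      (\<lambda>z. inv_into (pos_on P) (sinkhorn_chart P) (scaling_coords P lam z))"
    by (rule Ck_on_compose[OF open_sinkhorn_domain open_sinkhorn_chart_image _
          Ck_on_inv_sinkhorn_chart Ck_on_subset[OF Ck_on_scaling_coords]])
       (auto simp: sinkhorn_domain_def)
  then show ?thesis
    unfolding sinkhorn_extension_def[abs_def]
    by (rule Ck_on_linear_compose[OF open_sinkhorn_domain
          linear_matrix_of_vec[unfolded linear_conv_bounded_linear]])
qed

lemma sinkhorn_extension_eq_Phi:
  assumes "M \<in> pattern_matrices P" and "(r, c) \<in> scalable_marginals P"
  shows "(M, r, c) \<in> sinkhorn_domain P lam" and "sinkhorn_extension P lam (M, r, c) = Phi lam (M, r, c)"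
proof -
  have "vec_of_matrix M \<in> pos_on P"
    using assms(1) by (intro vec_of_matrix_in_pos_on) (simp add: pattern_matrices_def)
  then show "(M, r, c) \<in> sinkhorn_domain P lam" and "sinkhorn_extension P lam (M, r, c) = Phi lam (M, r, c)"
    using Phi_eq_inv_sinkhorn_chart[OF assms] by (simp_all add: sinkhorn_domain_def sinkhorn_extension_def)
qed

theorem theorem1:
  fixes lam :: real and P :: "('n::finite \<times> 'm::finite) set"
  assumes "lam > 0"
  shows "smooth_on {(M, r, c). M \<in> pattern_matrices P \<and> (r, c) \<in> scalable_marginals P} (Phi lam)"
  unfolding smooth_on_def
proof (intro exI conjI)
  show "open (sinkhorn_domain P lam)"
    by (rule open_sinkhorn_domain)
  show "smooth_open (sinkhorn_domain P lam) (sinkhorn_extension P lam)"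
    by (rule smooth_open_if_Ck_on[OF Ck_on_sinkhorn_extension])
  show "{(M, r, c). M \<in> pattern_matrices P \<and> (r, c) \<in> scalable_marginals P} \<subseteq> sinkhorn_domain P lam"
    using sinkhorn_extension_eq_Phi(1) by auto
  show "\<forall>z\<in>{(M, r, c). M \<in> pattern_matrices P \<and> (r, c) \<in> scalable_marginals P}.
      sinkhorn_extension P lam z = Phi lam z"
    using sinkhorn_extension_eq_Phi(2) by auto
qed

end
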